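(* Let $d=1$ and let $(X_1,M_1),\dots,(X_n,M_n)$ be i.i.d. copies of $(X,M)\sim\mathbb{P}_{X,M}$, $X\in\mathbb{R}$, $M\in\{0,1\}$ ($M=0$: $X$ observed), with arbitrary missingness mechanism $\pi(x)=\mathbb{P}[M=0\mid X=x]$. Assume $\mathbb{P}_X=(1-\epsilon)P_{\theta^*}+\epsilon\mathbb{Q}_X$ for some $\theta^*\in\Theta$, some distribution $\mathbb{Q}_X$ on $\mathbb{R}$ and $\epsilon\in[0,1)$, and let $\pi^*=\mathbb{E}_{X\sim P_{\theta^*}}[\pi(X)]>0$. Let $\theta_n^{\mathrm{MMD}}$ be a minimizer over $\Theta$ of $\theta\mapsto\frac1n\sum_{i:M_i=0}\mathbb{D}^2(P_\theta,\delta_{\{X_i\}})$ (equivalently of $\mathbb{D}(P_\theta,P_n)$, $P_n$ the empirical measure of the observed $X_i$). Then $$ \mathbb{E}_{\mathcal{S}}\big[\mathbb{D}(P_{\theta_n^{\mathrm{MMD}}},P_{\theta^*})\big]\le 4\epsilon+\frac{8\epsilon}{\pi^*(1-\epsilon)}+\frac{2\sqrt{\mathbb{V}_{X\sim P_{\theta^*}}[\pi(X)]}}{\pi^*}+\frac{2\sqrt2}{\sqrt{n\pi^*(1-\epsilon)}}, $$ where $\mathbb{E}_{\mathcal{S}}$ is the expectation over the sample $\{(X_i,M_i)\}_{1\le i\le n}$.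
   Context: $\{P_\theta:\theta\in\Theta\}$ is a model on $\mathbb{R}$. $k$ is a positive definite kernel on $\mathbb{R}$ bounded by $1$ and characteristic, with RKHS $\mathcal{H}$, mean embedding $\Phi(Q)=\mathbb{E}_{Y\sim Q}[k(Y,\cdot)]$ and MMD $\mathbb{D}(Q_1,Q_2)=\|\Phi(Q_1)-\Phi(Q_2)\|_{\mathcal{H}}$. *)

theory Defs
  imports "HOL-Probability.Probability"
begin

definition pd_kernel :: "(real \<Rightarrow> real \<Rightarrow> real) \<Rightarrow> bool" where
  "pd_kernel k \<longleftrightarrow> (\<forall>x y. k x y = k y x) \<and>
     (\<forall>(n::nat) (c::nat \<Rightarrow> real) (x::nat \<Rightarrow> real).
        (\<Sum>i<n. \<Sum>j<n. c i * c j * k (x i) (x j)) \<ge> 0)"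

text \<open>Squared MMD written out: the squared RKHS norm of the difference of mean embeddings
  \<open>\<parallel>\<Phi>(Q1) - \<Phi>(Q2)\<parallel>^2\<close>, unfolded via the reproducing property.\<close>
definition mmd_sq :: "(real \<Rightarrow> real \<Rightarrow> real) \<Rightarrow> real measure \<Rightarrow> real measure \<Rightarrow> real" where
  "mmd_sq k Q1 Q2 =
     (\<integral>x. \<integral>y. k x y \<partial>Q1 \<partial>Q1) - 2 * (\<integral>x. \<integral>y. k x y \<partial>Q2 \<partial>Q1)
     + (\<integral>x. \<integral>y. k x y \<partial>Q2 \<partial>Q2)"

definition mmd :: "(real \<Rightarrow> real \<Rightarrow> real) \<Rightarrow> real measure \<Rightarrow> real measure \<Rightarrow> real" where
  "mmd k Q1 Q2 = sqrt (mmd_sq k Q1 Q2)"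

definition characteristic :: "(real \<Rightarrow> real \<Rightarrow> real) \<Rightarrow> bool" where
  "characteristic k \<longleftrightarrow> (\<forall>Q1 Q2. prob_space Q1 \<and> sets Q1 = sets borel \<and>
      prob_space Q2 \<and> sets Q2 = sets borel \<and> mmd k Q1 Q2 = 0 \<longrightarrow> Q1 = Q2)"

text \<open>MMD objective. A sample is \<open>s :: nat \<Rightarrow> real \<times> bool\<close>; the flag \<open>snd (s i) = True\<close>
  encodes \<open>M_i = 0\<close> (X_i observed).\<close>
definition mmd_objective ::
  "(real \<Rightarrow> real \<Rightarrow> real) \<Rightarrow> ('a \<Rightarrow> real measure) \<Rightarrow> nat \<Rightarrow> (nat \<Rightarrow> real \<times> bool) \<Rightarrow> 'a \<Rightarrow> real" where
  "mmd_objective k P n s \<theta> =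
     (1 / real n) * (\<Sum>i\<in>{i. i < n \<and> snd (s i)}. (mmd k (P \<theta>) (return borel (fst (s i))))\<^sup>2)"

end

theory Submission
  imports Defs
begin

text \<open>Let \<open>\<nu>\<close> be the law of an observed \<open>X\<close>, i.e. \<open>P\<^sub>X\<close> reweighted by \<open>\<pi> / p\<close> with
  \<open>p = P[M = 0]\<close>, and let \<open>P\<^sub>n\<close> be the empirical measure of the \<open>N\<close> observed points. Up to
  a term independent of \<open>\<theta>\<close>, \<open>n\<close> times the MMD objective is \<open>N D\<^sup>2(P\<^sub>\<theta>, P\<^sub>n)\<close>, so the
  minimiser \<open>\<theta>\<^sub>n\<close> fits \<open>P\<^sub>n\<close> at least as well as \<open>\<theta>\<^sup>*\<close> does, and the triangle inequality gives
  \<open>D(P\<^bsub>\<theta>\<^sub>n\<^esub>, P\<^bsub>\<theta>\<^sup>*\<^esub>) \<le> 2 D(P\<^sub>n, \<nu>) + 2 D(\<nu>, P\<^bsub>\<theta>\<^sup>*\<^esub>)\<close>.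

  The bias \<open>D(\<nu>, P\<^bsub>\<theta>\<^sup>*\<^esub>)\<close> is at most the total variation of \<open>\<nu> - P\<^bsub>\<theta>\<^sup>*\<^esub>\<close>, which the
  mixture representation of \<open>P\<^sub>X\<close> bounds by the mean absolute deviation of \<open>\<pi>\<close> under
  \<open>P\<^bsub>\<theta>\<^sup>*\<^esub>\<close> (hence by its standard deviation) plus a term of order \<open>\<epsilon>\<close>.

  Given which points are observed, they are i.i.d. \<open>\<nu>\<close>, so the cross terms of
  \<open>D\<^sup>2(P\<^sub>n, \<nu>)\<close> have mean zero and \<open>E D\<^sup>2(P\<^sub>n, \<nu>) \<le> E[1/N]\<close>; a leave-one-out computation
  gives \<open>E[1/(N+1)] \<le> 1/(n p)\<close>, and Jensen's inequality turns the second moment into the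
  \<open>1/\<surd>n\<close> term.

  The triangle inequality for \<open>D\<close> on signed combinations of distributions needs the Gram
  matrix of finitely many distributions to be positive semidefinite; this follows from the
  positive definiteness of \<open>k\<close> by replacing each distribution by many independent samples.\<close>

section \<open>Bounded integrands and finite products of probability spaces\<close>

lemma (in prob_space) integrable_bounded:
  fixes f :: "'a \<Rightarrow> real"
  assumes "f \<in> borel_measurable M" "\<And>x. x \<in> space M \<Longrightarrow> \<bar>f x\<bar> \<le> B"
  shows "integrable M f"
  using assms by (intro integrable_const_bound[where B=B]) auto

lemma (in prob_space) abs_integral_le_bound:
  fixes f :: "'a \<Rightarrow> real"
  assumes "f \<in> borel_measurable M" "\<And>x. x \<in> space M \<Longrightarrow> \<bar>f x\<bar> \<le> B"
  shows "\<bar>\<integral>x. f x \<partial>M\<bar> \<le> B"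
proof -
  have "\<bar>\<integral>x. f x \<partial>M\<bar> \<le> (\<integral>x. \<bar>f x\<bar> \<partial>M)" by (rule integral_abs_bound)
  also have "\<dots> \<le> B"
    using assms by (intro integral_le_const integrable_bounded[where B=B]) auto
  finally show ?thesis .
qed

lemma (in prob_space) square_integral_le_integral_square:
  fixes f :: "'a \<Rightarrow> real"
  assumes f[measurable]: "f \<in> borel_measurable M" and B: "\<And>x. x \<in> space M \<Longrightarrow> \<bar>f x\<bar> \<le> B"
  shows "(\<integral>x. f x \<partial>M)\<^sup>2 \<le> (\<integral>x. (f x)\<^sup>2 \<partial>M)"
proof -
  have "integrable M (\<lambda>x. (f x)\<^sup>2)"
  proof (rule integrable_bounded[where B="B\<^sup>2"])
    fix x assume "x \<in> space M"
    then have "\<bar>f x\<bar>\<^sup>2 \<le> B\<^sup>2" using B by (intro power_mono) auto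
    then show "\<bar>(f x)\<^sup>2\<bar> \<le> B\<^sup>2" by simp
  qed simp
  moreover have "0 \<le> variance f" by (intro integral_nonneg_AE) auto
  ultimately show ?thesis
    using variance_eq[OF integrable_bounded[OF f B]] by simp
qed

lemma integral_PiM_redraw_coordinate:
  fixes M :: "'i \<Rightarrow> 'a measure" and F :: "('i \<Rightarrow> 'a) \<Rightarrow> real"
  assumes P: "\<And>i. prob_space (M i)" and I: "finite I" "a \<in> I"
    and F[measurable]: "F \<in> borel_measurable (PiM I M)"
    and B: "\<And>s. s \<in> space (PiM I M) \<Longrightarrow> \<bar>F s\<bar> \<le> B"
  shows "(\<integral>s. F s \<partial>PiM I M) = (\<integral>s. (\<integral>y. F (s(a:=y)) \<partial>M a) \<partial>PiM I M)"
proof -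
  interpret product_prob_space M I
    by (simp add: product_prob_space_def product_sigma_finite_def product_prob_space_axioms_def P
        prob_space_imp_sigma_finite)
  define J where "J = I - {a}"
  have IJ: "I = insert a J" "a \<notin> J" "finite J" using I by (auto simp: J_def)
  have upd[measurable]: "(\<lambda>(s,y). s(a:=y)) \<in> measurable (PiM I M \<Otimes>\<^sub>M M a) (PiM I M)"
    using measurable_fun_upd[where I=I and J=I and i=a and f=fst and h=snd and N="PiM I M \<Otimes>\<^sub>M M a"]
      I by (auto simp: case_prod_beta')
  define G where "G s = (\<integral>y. F (s(a:=y)) \<partial>M a)" for s
  have G[measurable]: "G \<in> borel_measurable (PiM I M)"
    unfolding G_def by (intro M.borel_measurable_lebesgue_integral) measurable
  have "\<bar>G s\<bar> \<le> B" if "s \<in> space (PiM I M)" for s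
    unfolding G_def using that I B
    by (intro M.abs_integral_le_bound) (auto simp: space_PiM PiE_iff extensional_def)
  then have int: "integrable (PiM I M) F" "integrable (PiM I M) G"
    using B by (auto intro!: P.integrable_bounded[where B=B])
  have "(\<integral>s. F s \<partial>PiM I M) = (\<integral>x. (\<integral>y. F (x(a:=y)) \<partial>M a) \<partial>PiM J M)"
    using product_integral_insert[of J a F] int IJ by simp
  also have "\<dots> = (\<integral>x. (\<integral>y. G (x(a:=y)) \<partial>M a) \<partial>PiM J M)"
    by (simp add: G_def M.prob_space)
  also have "\<dots> = (\<integral>s. G s \<partial>PiM I M)"
    using product_integral_insert[of J a G] int IJ by simp
  finally show ?thesis unfolding G_def .
qed

lemma integral_PiM_component:
  fixes M :: "'i \<Rightarrow> 'a measure" and f :: "'a \<Rightarrow> real"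
  assumes P: "\<And>i. i \<in> I \<Longrightarrow> prob_space (M i)" and j: "j \<in> I"
    and f: "f \<in> borel_measurable (M j)"
  shows "(\<integral>s. f (s j) \<partial>PiM I M) = (\<integral>x. f x \<partial>M j)"
proof -
  have "(\<integral>x. f x \<partial>M j) = (\<integral>x. f x \<partial>distr (PiM I M) (M j) (\<lambda>s. s j))"
    using distr_PiM_component[of I M j, OF P j] by simp
  also have "\<dots> = (\<integral>s. f (s j) \<partial>PiM I M)"
    using j f by (intro integral_distr) auto
  finally show ?thesis ..
qed

lemma integral_PiM_two_components:
  fixes M :: "'i \<Rightarrow> 'a measure" and f :: "'a \<Rightarrow> 'a \<Rightarrow> real"
  assumes P: "\<And>i. prob_space (M i)" and I: "finite I" "j \<in> I" "j' \<in> I" "j \<noteq> j'"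
    and f[measurable]: "(\<lambda>(x,y). f x y) \<in> borel_measurable (M j \<Otimes>\<^sub>M M j')"
    and B: "\<And>x y. x \<in> space (M j) \<Longrightarrow> y \<in> space (M j') \<Longrightarrow> \<bar>f x y\<bar> \<le> B"
  shows "(\<integral>s. f (s j) (s j') \<partial>PiM I M) = (\<integral>y. (\<integral>x. f x y \<partial>M j) \<partial>M j')"
proof -
  interpret prob_space "M j" by fact
  have "(\<integral>s. f (s j) (s j') \<partial>PiM I M) = (\<integral>s. (\<integral>x. f x (s j') \<partial>M j) \<partial>PiM I M)"
    using I B
    by (subst integral_PiM_redraw_coordinate[OF P I(1,2), where B=B]) (auto simp: space_PiM PiE_iff)
  also have "\<dots> = (\<integral>y. (\<integral>x. f x y \<partial>M j) \<partial>M j')"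
  proof (rule integral_PiM_component[OF P I(3)])
    have "(\<lambda>(y,x). f x y) \<in> borel_measurable (M j' \<Otimes>\<^sub>M M j)"
      using measurable_comp[OF measurable_pair_swap' f] by (simp add: comp_def case_prod_beta')
    then show "(\<lambda>y. \<integral>x. f x y \<partial>M j) \<in> borel_measurable (M j')"
      by (intro borel_measurable_lebesgue_integral) simp
  qed
  finally show ?thesis .
qed

section \<open>Inner products of kernel mean embeddings\<close>

definition kernel_inner :: "(real \<Rightarrow> real \<Rightarrow> real) \<Rightarrow> real measure \<Rightarrow> real measure \<Rightarrow> real" where
  "kernel_inner k A B = (\<integral>x. \<integral>y. k x y \<partial>B \<partial>A)"

lemma mmd_sq_kernel_inner:
  "mmd_sq k A B = kernel_inner k A A - 2 * kernel_inner k A B + kernel_inner k B B"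
  unfolding mmd_sq_def kernel_inner_def ..

lemma real_distribution_iff: "real_distribution M \<longleftrightarrow> prob_space M \<and> sets M = sets borel"
  by (simp add: real_distribution_def real_distribution_axioms_def)

lemma real_distribution_return: "real_distribution (return borel x)"
  by (simp add: real_distribution_iff prob_space_return)

lemma (in real_distribution) borel_measurable_eq: "borel_measurable M = borel_measurable borel"
  by (intro measurable_cong_sets) auto

lemma sum_lessThan_mult_mod:
  fixes f :: "nat \<Rightarrow> 'a::comm_semiring_1"
  shows "(\<Sum>j<m * L. f (j mod L)) = of_nat m * (\<Sum>i<L. f i)"
proof -
  have "(\<Sum>j<m * L. f (j mod L)) = (\<Sum>r<m. \<Sum>j\<in>{r * L..<r * L + L}. f (j mod L))"
    by (rule sum.nat_group[symmetric])
  also have "\<dots> = (\<Sum>r<m. \<Sum>i<L. f i)"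
  proof (rule sum.cong[OF refl])
    fix r
    have "(\<Sum>j\<in>{r * L..<r * L + L}. f (j mod L)) = (\<Sum>j\<in>{0 + r * L..<L + r * L}. f (j mod L))"
      by (simp add: add.commute)
    also have "\<dots> = (\<Sum>i<L. f i)"
      by (subst sum.shift_bounds_nat_ivl) (auto simp: atLeast0LessThan intro!: sum.cong)
    finally show "(\<Sum>j\<in>{r * L..<r * L + L}. f (j mod L)) = (\<Sum>i<L. f i)" .
  qed
  finally show ?thesis by simp
qed

locale bounded_pd_kernel =
  fixes k :: "real \<Rightarrow> real \<Rightarrow> real"
  assumes kernel_pd: "pd_kernel k"
    and kernel_bounded: "\<And>x y. \<bar>k x y\<bar> \<le> 1"
    and kernel_measurable: "(\<lambda>(x, y). k x y) \<in> borel_measurable borel"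
begin

lemma kernel_commute: "k x y = k y x"
  using kernel_pd by (simp add: pd_kernel_def)

lemma kernel_sum_nonneg:
  fixes n :: nat and c x :: "nat \<Rightarrow> real"
  shows "0 \<le> (\<Sum>i<n. \<Sum>j<n. c i * c j * k (x i) (x j))"
  using kernel_pd unfolding pd_kernel_def by blast

lemma kernel_measurable_pair[measurable]: "(\<lambda>(x, y). k x y) \<in> borel_measurable (borel \<Otimes>\<^sub>M borel)"
  using kernel_measurable by (simp add: borel_prod)

lemma kernel_measurable_pair_distr:
  assumes "real_distribution A" "real_distribution B"
  shows "(\<lambda>(x, y). k x y) \<in> borel_measurable (A \<Otimes>\<^sub>M B)"
  using assms
  by (subst measurable_cong_sets[OF sets_pair_measure_cong refl, of _ borel _ borel])
    (auto simp: real_distribution_iff)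

lemma kernel_inner_return_return: "kernel_inner k (return borel x) (return borel y) = k x y"
  unfolding kernel_inner_def by (simp add: integral_return)

lemma kernel_mean_measurable[measurable]:
  assumes "real_distribution B"
  shows "(\<lambda>x. \<integral>y. k x y \<partial>B) \<in> borel_measurable borel"
proof -
  interpret B: real_distribution B by fact
  show ?thesis
    by (intro B.borel_measurable_lebesgue_integral)
      (simp add: measurable_cong_sets[OF sets_pair_measure_cong[OF refl B.events_eq_borel] refl])
qed

lemma abs_kernel_mean_le: "real_distribution B \<Longrightarrow> \<bar>\<integral>y. k x y \<partial>B\<bar> \<le> 1"
  by (rule prob_space.abs_integral_le_bound)
    (auto simp: real_distribution_iff real_distribution.borel_measurable_eq kernel_bounded)

lemma abs_kernel_inner_le: "real_distribution A \<Longrightarrow> real_distribution B \<Longrightarrow> \<bar>kernel_inner k A B\<bar> \<le> 1"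
  unfolding kernel_inner_def
  by (rule prob_space.abs_integral_le_bound)
    (auto simp: real_distribution_iff real_distribution.borel_measurable_eq abs_kernel_mean_le)

lemma kernel_inner_commute:
  assumes A: "real_distribution A" and B: "real_distribution B"
  shows "kernel_inner k A B = kernel_inner k B A"
proof -
  interpret pair_prob_space A B using A B
    by (simp add: pair_prob_space_def pair_sigma_finite_def prob_space_imp_sigma_finite real_distribution_iff)
  have "integrable (A \<Otimes>\<^sub>M B) (\<lambda>(x, y). k x y)"
    by (rule integrable_bounded[where B=1]) (auto simp: kernel_measurable_pair_distr A B kernel_bounded)
  from Fubini_integral[OF this] show ?thesis unfolding kernel_inner_def by (simp add: kernel_commute)
qed

lemma integral_PiM_kernel_components:
  assumes M: "\<And>i. real_distribution (M i)" and I: "finite I" "j \<in> I" "j' \<in> I"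
  shows "(\<integral>s. k (s j) (s j') \<partial>PiM I M) =
    (if j = j' then \<integral>x. k x x \<partial>M j else kernel_inner k (M j) (M j'))"
proof (cases "j = j'")
  case True
  have "(\<integral>s. k (s j) (s j) \<partial>PiM I M) = (\<integral>x. k x x \<partial>M j)"
    using I M by (intro integral_PiM_component)
      (auto simp: real_distribution_iff real_distribution.borel_measurable_eq)
  then show ?thesis using True by simp
next
  case False
  have "(\<integral>s. k (s j) (s j') \<partial>PiM I M) = (\<integral>y. (\<integral>x. k x y \<partial>M j) \<partial>M j')"
    using I M False kernel_bounded
    by (intro integral_PiM_two_components) (auto simp: real_distribution_iff kernel_measurable_pair_distr)
  also have "\<dots> = kernel_inner k (M j) (M j')"
    using kernel_inner_commute[OF M M] by (simp add: kernel_inner_def kernel_commute)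
  finally show ?thesis using False by simp
qed

lemma integral_PiM_kernel_form:
  assumes M: "\<And>i. real_distribution (M i)" and I: "finite I"
  shows "(\<integral>s. (\<Sum>j\<in>I. \<Sum>j'\<in>I. w j * w j' * k (s j) (s j')) \<partial>PiM I M) =
    (\<Sum>j\<in>I. \<Sum>j'\<in>I. w j * w j' * kernel_inner k (M j) (M j'))
    + (\<Sum>j\<in>I. (w j)\<^sup>2 * ((\<integral>x. k x x \<partial>M j) - kernel_inner k (M j) (M j)))"
proof -
  interpret Pi: prob_space "PiM I M" using M by (intro prob_space_PiM) (simp add: real_distribution_iff)
  have "(\<lambda>s. k (s j) (s j')) \<in> borel_measurable (PiM I M)" if "j \<in> I" "j' \<in> I" for j j'
    using measurable_comp[OF measurable_Pair[OF measurable_component_singleton[OF that(1)]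
        measurable_component_singleton[OF that(2)]] kernel_measurable_pair_distr[OF M M]]
    by (simp add: comp_def)
  then have int: "integrable (PiM I M) (\<lambda>s. w j * w j' * k (s j) (s j'))"
    if "j \<in> I" "j' \<in> I" for j j'
    using that kernel_bounded by (intro integrable_mult_right Pi.integrable_bounded[where B=1]) auto
  have "(\<integral>s. (\<Sum>j\<in>I. \<Sum>j'\<in>I. w j * w j' * k (s j) (s j')) \<partial>PiM I M) =
      (\<Sum>j\<in>I. \<Sum>j'\<in>I. w j * w j' * (\<integral>s. k (s j) (s j') \<partial>PiM I M))"
    using int by (simp add: Bochner_Integration.integral_sum integrable_sum)
  also have "\<dots> = (\<Sum>j\<in>I. \<Sum>j'\<in>I. w j * w j' * kernel_inner k (M j) (M j')
      + (if j = j' then (w j)\<^sup>2 * ((\<integral>x. k x x \<partial>M j) - kernel_inner k (M j) (M j)) else 0))"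
    using I by (intro sum.cong refl)
      (simp add: integral_PiM_kernel_components[OF M] algebra_simps power2_eq_square)
  also have "\<dots> = (\<Sum>j\<in>I. \<Sum>j'\<in>I. w j * w j' * kernel_inner k (M j) (M j'))
      + (\<Sum>j\<in>I. (w j)\<^sup>2 * ((\<integral>x. k x x \<partial>M j) - kernel_inner k (M j) (M j)))"
    using I by (simp add: sum.distrib)
  finally show ?thesis .
qed

text \<open>Drawing one independent sample from each \<open>M j\<close> turns the Gram form into an expected
  kernel sum, which is nonnegative; the diagonal terms are where the two differ.\<close>
lemma kernel_gram_lower_bound:
  fixes M :: "nat \<Rightarrow> real measure" and N :: nat
  assumes M: "\<And>i. real_distribution (M i)"
  shows "- 2 * (\<Sum>j<N. (w j)\<^sup>2) \<le> (\<Sum>j<N. \<Sum>j'<N. w j * w j' * kernel_inner k (M j) (M j'))"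
proof -
  have "0 \<le> (\<integral>s. (\<Sum>j<N. \<Sum>j'<N. w j * w j' * k (s j) (s j')) \<partial>PiM {..<N} M)"
    by (intro integral_nonneg_AE AE_I2 kernel_sum_nonneg)
  also have "\<dots> = (\<Sum>j<N. \<Sum>j'<N. w j * w j' * kernel_inner k (M j) (M j'))
      + (\<Sum>j<N. (w j)\<^sup>2 * ((\<integral>x. k x x \<partial>M j) - kernel_inner k (M j) (M j)))"
    using M by (intro integral_PiM_kernel_form) auto
  also have "(\<Sum>j<N. (w j)\<^sup>2 * ((\<integral>x. k x x \<partial>M j) - kernel_inner k (M j) (M j))) \<le> (\<Sum>j<N. (w j)\<^sup>2 * 2)"
  proof (intro sum_mono mult_left_mono)
    fix j
    have "\<bar>\<integral>x. k x x \<partial>M j\<bar> \<le> 1"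
      using M[of j] kernel_bounded
      by (intro prob_space.abs_integral_le_bound)
        (auto simp: real_distribution_iff real_distribution.borel_measurable_eq)
    then show "(\<integral>x. k x x \<partial>M j) - kernel_inner k (M j) (M j) \<le> 2"
      using abs_kernel_inner_le[OF M M, of j j] by linarith
  qed simp
  also have "(\<Sum>j<N. (w j)\<^sup>2 * 2) = 2 * (\<Sum>j<N. (w j)\<^sup>2)"
    by (simp add: sum_distrib_left mult.commute)
  finally show ?thesis by linarith
qed

text \<open>Repeat each \<open>M i\<close> \<open>m\<close> times with weight \<open>c i / m\<close>: the diagonal defect of
  \<open>kernel_gram_lower_bound\<close> becomes \<open>O(1/m)\<close>.\<close>
lemma kernel_gram_nonneg:
  fixes M :: "nat \<Rightarrow> real measure" and L :: nat
  assumes M: "\<And>i. i < L \<Longrightarrow> real_distribution (M i)"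
  shows "0 \<le> (\<Sum>i<L. \<Sum>j<L. c i * c j * kernel_inner k (M i) (M j))" (is "0 \<le> ?G")
proof (cases "L = 0")
  case False
  define C where "C = 2 * (\<Sum>i<L. (c i)\<^sup>2)"
  have approx: "0 \<le> ?G + C / real m" if m: "m > 0" for m
  proof -
    define w where "w j = c (j mod L) / real m" for j
    have "(\<Sum>j<m * L. \<Sum>j'<m * L. w j * w j' * kernel_inner k (M (j mod L)) (M (j' mod L)))
        = (\<Sum>j<m * L. \<Sum>j'<m * L.
            (\<lambda>a b. c a * c b * kernel_inner k (M a) (M b) / (real m)\<^sup>2) (j mod L) (j' mod L))"
      by (simp add: w_def power2_eq_square)
    also have "\<dots> = (\<Sum>j<m * L. real m *
        (\<Sum>i'<L. c (j mod L) * c i' * kernel_inner k (M (j mod L)) (M i') / (real m)\<^sup>2))"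
      by (subst sum_lessThan_mult_mod) simp
    also have "\<dots> = real m * (real m * (\<Sum>i<L. \<Sum>i'<L. c i * c i' * kernel_inner k (M i) (M i') / (real m)\<^sup>2))"
      by (subst sum_distrib_left[symmetric], subst sum_lessThan_mult_mod) simp
    also have "\<dots> = ?G" using m by (simp add: sum_distrib_left power2_eq_square)
    finally have G: "(\<Sum>j<m * L. \<Sum>j'<m * L. w j * w j' * kernel_inner k (M (j mod L)) (M (j' mod L))) = ?G" .
    have "(\<Sum>j<m * L. (w j)\<^sup>2) = (\<Sum>j<m * L. (\<lambda>i. (c i)\<^sup>2 / (real m)\<^sup>2) (j mod L))"
      by (simp add: w_def power_divide)
    also have "\<dots> = real m * (\<Sum>i<L. (c i)\<^sup>2 / (real m)\<^sup>2)" by (rule sum_lessThan_mult_mod)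
    also have "\<dots> = C / 2 / real m"
      using m by (simp add: C_def sum_divide_distrib[symmetric] power2_eq_square)
    finally have W: "(\<Sum>j<m * L. (w j)\<^sup>2) = C / 2 / real m" .
    have "- 2 * (C / 2 / real m) \<le> ?G"
      using kernel_gram_lower_bound[where M="\<lambda>j. M (j mod L)" and N="m * L" and w=w] M False
      unfolding G W by simp
    then show ?thesis by simp
  qed
  have "(\<lambda>m. ?G + C / real m) \<longlonglongrightarrow> ?G + 0"
    by (intro tendsto_add tendsto_const lim_const_over_n)
  moreover have "\<forall>m\<ge>1. 0 \<le> ?G + C / real m"
    using approx by auto
  ultimately have "0 \<le> ?G + 0" by (intro LIMSEQ_le_const) auto
  then show ?thesis by simp
qed simp

lemma mmd_sq_nonneg:
  assumes A: "real_distribution A" and B: "real_distribution B"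
  shows "0 \<le> mmd_sq k A B"
proof -
  have "real_distribution (if i = 0 then A else B)" for i :: nat using A B by simp
  from kernel_gram_nonneg[of 2 "\<lambda>i. if i = 0 then A else B" "\<lambda>i. if i = 0 then 1 else -1", OF this]
  show ?thesis by (simp add: mmd_sq_kernel_inner numeral_2_eq_2 kernel_inner_commute[OF A B])
qed

lemma power2_mmd: "real_distribution A \<Longrightarrow> real_distribution B \<Longrightarrow> (mmd k A B)\<^sup>2 = mmd_sq k A B"
  unfolding mmd_def using mmd_sq_nonneg by simp

lemma mmd_le_2:
  assumes A: "real_distribution A" and B: "real_distribution B"
  shows "mmd k A B \<le> 2"
proof -
  have "mmd_sq k A B \<le> 4"
    using abs_kernel_inner_le[OF A A] abs_kernel_inner_le[OF A B] abs_kernel_inner_le[OF B B]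
    by (simp add: mmd_sq_kernel_inner abs_le_iff)
  then have "mmd k A B \<le> sqrt 4" unfolding mmd_def by (rule real_sqrt_le_mono)
  then show ?thesis by simp
qed

end

section \<open>Signed combinations of finitely many distributions\<close>

definition basis :: "nat \<Rightarrow> nat \<Rightarrow> real" where
  "basis j i = (if i = j then 1 else 0)"

definition uniform_weights :: "nat set \<Rightarrow> nat \<Rightarrow> real" where
  "uniform_weights S i = (if i \<in> S then 1 / real (card S) else 0)"

lemma sum_uniform_weights:
  assumes "S \<subseteq> {..<L}"
  shows "(\<Sum>i<L. uniform_weights S i * f i) = (\<Sum>i\<in>S. f i) / real (card S)"
proof -
  have "(\<Sum>i<L. uniform_weights S i * f i) = (\<Sum>i\<in>{i\<in>{..<L}. i \<in> S}. f i / real (card S))"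
    unfolding uniform_weights_def by (subst sum.inter_filter) (auto intro!: sum.cong)
  also have "{i\<in>{..<L}. i \<in> S} = S" using assms by auto
  finally show ?thesis by (simp add: sum_divide_distrib)
qed

text \<open>A weight vector \<open>u\<close> stands for the signed measure \<open>\<Sum>i<L. u i \<cdot> M i\<close>; \<open>gram u v\<close> is the
  RKHS inner product of the mean embeddings of two such combinations.\<close>
locale kernel_family = bounded_pd_kernel +
  fixes M :: "nat \<Rightarrow> real measure" and L :: nat
  assumes family_distribution: "\<And>i. i < L \<Longrightarrow> real_distribution (M i)"
begin

definition gram :: "(nat \<Rightarrow> real) \<Rightarrow> (nat \<Rightarrow> real) \<Rightarrow> real" where
  "gram u v = (\<Sum>i<L. \<Sum>j<L. u i * v j * kernel_inner k (M i) (M j))"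

definition gram_norm :: "(nat \<Rightarrow> real) \<Rightarrow> real" where
  "gram_norm u = sqrt (gram u u)"

lemma gram_nonneg: "0 \<le> gram u u"
  unfolding gram_def using kernel_gram_nonneg[OF family_distribution] by simp

lemma gram_commute: "gram u v = gram v u"
  unfolding gram_def
proof (subst sum.swap, intro sum.cong refl)
  fix i j assume "i \<in> {..<L}" "j \<in> {..<L}"
  then show "u j * v i * kernel_inner k (M j) (M i) = v i * u j * kernel_inner k (M i) (M j)"
    using kernel_inner_commute family_distribution by simp
qed

lemma gram_add_left: "gram (\<lambda>i. u i + v i) w = gram u w + gram v w"
  unfolding gram_def by (simp add: algebra_simps sum.distrib)

lemma gram_scale_left: "gram (\<lambda>i. t * u i) w = t * gram u w"
  unfolding gram_def by (simp add: algebra_simps sum_distrib_left)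

lemma gram_add_right: "gram w (\<lambda>i. u i + v i) = gram w u + gram w v"
  using gram_add_left gram_commute by metis

lemma gram_scale_right: "gram w (\<lambda>i. t * u i) = t * gram w u"
  using gram_scale_left gram_commute by metis

lemma gram_add_add: "gram (\<lambda>i. u i + v i) (\<lambda>i. u i + v i) = gram u u + 2 * gram u v + gram v v"
  by (simp add: gram_add_left gram_add_right gram_commute[of v u])

lemma gram_diff_diff: "gram (\<lambda>i. u i - v i) (\<lambda>i. u i - v i) = gram u u - 2 * gram u v + gram v v"
proof -
  have "gram (\<lambda>i. u i - v i) (\<lambda>i. u i - v i) = gram (\<lambda>i. u i + (-1) * v i) (\<lambda>i. u i + (-1) * v i)"
    by simp
  also have "\<dots> = gram u u - 2 * gram u v + gram v v"
    unfolding gram_add_add gram_scale_left gram_scale_right by simp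
  finally show ?thesis .
qed

lemma gram_Cauchy_Schwarz: "(gram u v)\<^sup>2 \<le> gram u u * gram v v"
proof -
  have quadratic: "0 \<le> gram u u + 2 * t * gram u v + t\<^sup>2 * gram v v" for t
    using gram_nonneg[of "\<lambda>i. u i + t * v i"]
    by (simp add: gram_add_add gram_scale_left gram_scale_right power2_eq_square)
  show ?thesis
  proof (cases "gram v v = 0")
    case True
    have "gram u v = 0"
    proof (rule ccontr)
      assume uv: "gram u v \<noteq> 0"
      have "0 \<le> gram u u + 2 * (- (gram u u + 1) / (2 * gram u v)) * gram u v"
        using quadratic[of "- (gram u u + 1) / (2 * gram u v)"] True by simp
      also have "\<dots> = -1" using uv by (simp add: field_simps)
      finally show False by simp
    qed
    then show ?thesis using gram_nonneg[of u] gram_nonneg[of v] by simp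
  next
    case False
    then have pos: "gram v v > 0" using gram_nonneg[of v] by simp
    have "0 \<le> gram u u + 2 * (- gram u v / gram v v) * gram u v + (- gram u v / gram v v)\<^sup>2 * gram v v"
      by (rule quadratic)
    also have "\<dots> = gram u u - (gram u v)\<^sup>2 / gram v v"
      using pos by (simp add: field_simps power2_eq_square)
    finally show ?thesis using pos by (simp add: field_simps)
  qed
qed

lemma gram_norm_triangle: "gram_norm (\<lambda>i. u i + v i) \<le> gram_norm u + gram_norm v"
proof -
  have "gram u v \<le> sqrt ((gram u v)\<^sup>2)" by simp
  also have "\<dots> \<le> gram_norm u * gram_norm v"
    unfolding gram_norm_def real_sqrt_mult[symmetric] by (rule real_sqrt_le_mono[OF gram_Cauchy_Schwarz])
  finally have "gram (\<lambda>i. u i + v i) (\<lambda>i. u i + v i) \<le> (gram_norm u + gram_norm v)\<^sup>2"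
    using gram_nonneg[of u] gram_nonneg[of v] by (simp add: gram_add_add power2_sum gram_norm_def)
  then have "gram_norm (\<lambda>i. u i + v i) \<le> sqrt ((gram_norm u + gram_norm v)\<^sup>2)"
    unfolding gram_norm_def by (rule real_sqrt_le_mono)
  then show ?thesis using gram_nonneg[of u] gram_nonneg[of v] by (simp add: gram_norm_def)
qed

lemma gram_norm_diff_commute: "gram_norm (\<lambda>i. u i - v i) = gram_norm (\<lambda>i. v i - u i)"
  unfolding gram_norm_def gram_diff_diff using gram_commute[of u v] by simp

lemma gram_basis_left:
  assumes "j < L"
  shows "gram (basis j) v = (\<Sum>i<L. v i * kernel_inner k (M j) (M i))"
proof -
  have "gram (basis j) v = (\<Sum>i'<L. if i' = j then (\<Sum>i<L. v i * kernel_inner k (M i') (M i)) else 0)"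
    unfolding gram_def by (intro sum.cong) (auto simp: basis_def)
  then show ?thesis using assms by simp
qed

lemma gram_basis_basis:
  assumes "j < L" "i < L"
  shows "gram (basis j) (basis i) = kernel_inner k (M j) (M i)"
proof -
  have "gram (basis j) (basis i) = (\<Sum>i'<L. if i' = i then kernel_inner k (M j) (M i') else 0)"
    unfolding gram_basis_left[OF assms(1)] by (intro sum.cong) (auto simp: basis_def)
  then show ?thesis using assms by simp
qed

lemma mmd_eq_gram_norm: "a < L \<Longrightarrow> b < L \<Longrightarrow> mmd k (M a) (M b) = gram_norm (\<lambda>i. basis a i - basis b i)"
  unfolding mmd_def gram_norm_def gram_diff_diff
  by (simp add: gram_basis_basis mmd_sq_kernel_inner gram_commute[of "basis b" "basis a"])

lemma gram_basis_uniform_weights: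
  assumes S: "S \<subseteq> {..<L}" and a: "a < L"
  shows "gram (basis a) (uniform_weights S) = (\<Sum>i\<in>S. kernel_inner k (M a) (M i)) / real (card S)"
  using sum_uniform_weights[OF S] by (simp add: gram_basis_left[OF a])

lemma gram_uniform_weights:
  assumes S: "S \<subseteq> {..<L}"
  shows "gram (uniform_weights S) (uniform_weights S)
    = (\<Sum>i\<in>S. \<Sum>j\<in>S. kernel_inner k (M i) (M j)) / (real (card S))\<^sup>2"
proof -
  have "gram (uniform_weights S) (uniform_weights S)
      = (\<Sum>i<L. uniform_weights S i * (\<Sum>j<L. uniform_weights S j * kernel_inner k (M i) (M j)))"
    unfolding gram_def by (simp add: sum_distrib_left mult.assoc)
  also have "\<dots> = (\<Sum>i<L. uniform_weights S i * ((\<Sum>j\<in>S. kernel_inner k (M i) (M j)) / real (card S)))"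
    by (simp only: sum_uniform_weights[OF S])
  also have "\<dots> = (\<Sum>i\<in>S. (\<Sum>j\<in>S. kernel_inner k (M i) (M j)) / real (card S)) / real (card S)"
    by (rule sum_uniform_weights[OF S])
  finally show ?thesis by (simp add: power2_eq_square sum_divide_distrib)
qed

text \<open>Up to a term independent of \<open>a\<close>, the empirical MMD objective of \<open>M a\<close> is the squared
  distance from \<open>M a\<close> to the empirical measure of \<open>S\<close>.\<close>
lemma sum_mmd_sq_eq_gram:
  assumes S: "S \<subseteq> {..<L}" "S \<noteq> {}" and a: "a < L"
  defines "p \<equiv> uniform_weights S"
  shows "(\<Sum>i\<in>S. mmd_sq k (M a) (M i))
    = real (card S) * gram (\<lambda>i. basis a i - p i) (\<lambda>i. basis a i - p i)
      + (\<Sum>i\<in>S. kernel_inner k (M i) (M i)) - real (card S) * gram p p"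
proof -
  have N: "real (card S) > 0" using S finite_subset by (auto simp: card_gt_0_iff)
  have "(\<Sum>i\<in>S. mmd_sq k (M a) (M i))
      = real (card S) * kernel_inner k (M a) (M a) - 2 * (\<Sum>i\<in>S. kernel_inner k (M a) (M i))
        + (\<Sum>i\<in>S. kernel_inner k (M i) (M i))"
    by (simp add: mmd_sq_kernel_inner sum.distrib sum_subtractf sum_distrib_left)
  also have "\<dots> = real (card S) * (kernel_inner k (M a) (M a)
        - 2 * ((\<Sum>i\<in>S. kernel_inner k (M a) (M i)) / real (card S)) + gram p p)
      + (\<Sum>i\<in>S. kernel_inner k (M i) (M i)) - real (card S) * gram p p"
    using N by (simp add: field_simps)
  also have "kernel_inner k (M a) (M a) - 2 * ((\<Sum>i\<in>S. kernel_inner k (M a) (M i)) / real (card S))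
      + gram p p = gram (\<lambda>i. basis a i - p i) (\<lambda>i. basis a i - p i)"
    unfolding gram_diff_diff p_def using a S
    by (simp add: gram_basis_basis gram_basis_uniform_weights)
  finally show ?thesis .
qed

lemma mmd_le_of_empirical_minimizer:
  assumes S: "S \<subseteq> {..<L}" "S \<noteq> {}" and abc: "a < L" "b < L" "c < L"
    and minimal: "(\<Sum>i\<in>S. mmd_sq k (M a) (M i)) \<le> (\<Sum>i\<in>S. mmd_sq k (M b) (M i))"
  defines "p \<equiv> uniform_weights S"
  shows "mmd k (M a) (M b) \<le> 2 * gram_norm (\<lambda>i. p i - basis c i) + 2 * mmd k (M c) (M b)"
proof -
  have N: "real (card S) > 0" using S finite_subset by (auto simp: card_gt_0_iff)
  have "gram (\<lambda>i. basis a i - p i) (\<lambda>i. basis a i - p i) \<le> gram (\<lambda>i. basis b i - p i) (\<lambda>i. basis b i - p i)"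
    using minimal N unfolding sum_mmd_sq_eq_gram[OF S abc(1)] sum_mmd_sq_eq_gram[OF S abc(2)] p_def
    by simp
  then have closer: "gram_norm (\<lambda>i. basis a i - p i) \<le> gram_norm (\<lambda>i. p i - basis b i)"
    unfolding gram_norm_diff_commute[of p "basis b"] gram_norm_def by (rule real_sqrt_le_mono)
  have "mmd k (M a) (M b) = gram_norm (\<lambda>i. (basis a i - p i) + (p i - basis b i))"
    using abc by (simp add: mmd_eq_gram_norm)
  also have "\<dots> \<le> 2 * gram_norm (\<lambda>i. p i - basis b i)"
    using gram_norm_triangle[of "\<lambda>i. basis a i - p i" "\<lambda>i. p i - basis b i"] closer by simp
  also have "gram_norm (\<lambda>i. p i - basis b i) = gram_norm (\<lambda>i. (p i - basis c i) + (basis c i - basis b i))"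
    by simp
  also have "\<dots> \<le> gram_norm (\<lambda>i. p i - basis c i) + mmd k (M c) (M b)"
    unfolding mmd_eq_gram_norm[OF abc(3,2)] by (rule gram_norm_triangle)
  finally show ?thesis by simp
qed

end

section \<open>Mixtures and reweighted distributions\<close>

lemma nn_integral_mixture:
  assumes sets: "sets N1 = sets M" "sets N2 = sets M"
    and emeasure: "\<And>A. A \<in> sets M \<Longrightarrow> emeasure M A = a * emeasure N1 A + b * emeasure N2 A"
    and f: "f \<in> borel_measurable M"
  shows "(\<integral>\<^sup>+x. f x \<partial>M) = a * (\<integral>\<^sup>+x. f x \<partial>N1) + b * (\<integral>\<^sup>+x. f x \<partial>N2)"
proof -
  note meas = measurable_cong_sets[OF sets(1) refl] measurable_cong_sets[OF sets(2) refl]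
  show ?thesis
    using f
  proof (induct rule: borel_measurable_induct)
    case (cong f g)
    have "(\<integral>\<^sup>+x. f x \<partial>N) = (\<integral>\<^sup>+x. g x \<partial>N)" if "space N = space M" for N
      using cong(3) that by (intro nn_integral_cong) auto
    then show ?case using cong(4) sets[THEN sets_eq_imp_space_eq] by simp
  next
    case (set A)
    then show ?case using sets emeasure by simp
  next
    case (mult u c)
    then show ?case by (simp add: nn_integral_cmult meas algebra_simps)
  next
    case (add u v)
    then show ?case by (simp add: nn_integral_add meas algebra_simps)
  next
    case (seq U)
    have inc: "incseq (\<lambda>i. c * \<integral>\<^sup>+x. U i x \<partial>N)" for c N
      using seq(4) by (auto simp: incseq_def le_fun_def intro!: nn_integral_mono mult_left_mono)
    have "(\<integral>\<^sup>+x. (SUP i. U i) x \<partial>M) = (SUP i. \<integral>\<^sup>+x. U i x \<partial>M)"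
      using nn_integral_monotone_convergence_SUP[OF seq(4)] seq(1) by (simp add: SUP_apply image_comp)
    also have "\<dots> = (SUP i. a * (\<integral>\<^sup>+x. U i x \<partial>N1) + b * (\<integral>\<^sup>+x. U i x \<partial>N2))"
      using seq by simp
    also have "\<dots> = a * (SUP i. \<integral>\<^sup>+x. U i x \<partial>N1) + b * (SUP i. \<integral>\<^sup>+x. U i x \<partial>N2)"
      using inc by (simp add: ennreal_SUP_add SUP_mult_left_ennreal[symmetric])
    also have "\<dots> = a * (\<integral>\<^sup>+x. (SUP i. U i) x \<partial>N1) + b * (\<integral>\<^sup>+x. (SUP i. U i) x \<partial>N2)"
      using nn_integral_monotone_convergence_SUP[OF seq(4)] seq(1) by (simp add: meas SUP_apply image_comp)
    finally show ?case .
  qed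
qed

lemma (in prob_space) abs_integral_mult_le:
  fixes f w :: "'a \<Rightarrow> real"
  assumes [measurable]: "f \<in> borel_measurable M" "w \<in> borel_measurable M"
    and f: "\<And>x. \<bar>f x\<bar> \<le> B" and w: "\<And>x. \<bar>w x\<bar> \<le> C"
  shows "\<bar>\<integral>x. w x * f x \<partial>M\<bar> \<le> B * (\<integral>x. \<bar>w x\<bar> \<partial>M)"
proof -
  have "0 \<le> B" "0 \<le> C" using f w by (metis abs_ge_zero order_trans)+
  have "\<bar>\<integral>x. w x * f x \<partial>M\<bar> \<le> (\<integral>x. \<bar>w x * f x\<bar> \<partial>M)" by (rule integral_abs_bound)
  also have "\<dots> \<le> (\<integral>x. B * \<bar>w x\<bar> \<partial>M)"
  proof (rule integral_mono)
    show "integrable M (\<lambda>x. \<bar>w x * f x\<bar>)"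
      using f w \<open>0 \<le> C\<close> by (intro integrable_bounded[where B="C * B"]) (auto simp: abs_mult intro!: mult_mono)
    show "integrable M (\<lambda>x. B * \<bar>w x\<bar>)"
      using w \<open>0 \<le> B\<close> by (intro integrable_bounded[where B="B * C"]) (auto simp: abs_mult intro!: mult_left_mono)
    show "\<bar>w x * f x\<bar> \<le> B * \<bar>w x\<bar>" for x
      using f[of x] mult_left_mono[of "\<bar>f x\<bar>" B "\<bar>w x\<bar>"] by (simp add: abs_mult mult.commute)
  qed
  finally show ?thesis by simp
qed

locale missing_data = bounded_pd_kernel k
  for k :: "real \<Rightarrow> real \<Rightarrow> real" +
  fixes Pstar Q PX :: "real measure" and \<epsilon> :: real
    and \<pi> :: "real \<Rightarrow> real" and PXM :: "(real \<times> bool) measure"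
  assumes Pstar: "real_distribution Pstar" and Q: "real_distribution Q" and PX: "real_distribution PX"
    and eps: "0 \<le> \<epsilon>" "\<epsilon> < 1"
    and mixture: "\<And>A. A \<in> sets borel \<Longrightarrow>
                    measure PX A = (1 - \<epsilon>) * measure Pstar A + \<epsilon> * measure Q A"
    and pi_measurable[measurable]: "\<pi> \<in> borel_measurable borel"
    and pi_range: "\<And>x. 0 \<le> \<pi> x \<and> \<pi> x \<le> 1"
    and PXM: "prob_space PXM" "sets PXM = sets (borel \<Otimes>\<^sub>M count_space UNIV)"
    and PXM_observed: "\<And>A. A \<in> sets borel \<Longrightarrow> measure PXM (A \<times> {True}) = (\<integral>x\<in>A. \<pi> x \<partial>PX)"
    and integral_pi_Pstar_pos: "(\<integral>x. \<pi> x \<partial>Pstar) > 0"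
begin

definition "p_obs = (\<integral>x. \<pi> x \<partial>PX)"
definition "pi_star = (\<integral>x. \<pi> x \<partial>Pstar)"
definition "pi_Q = (\<integral>x. \<pi> x \<partial>Q)"

text \<open>The law of an observed \<open>X\<close>, i.e. of \<open>X\<close> given \<open>M = 0\<close>.\<close>
definition "obs_distr = density PX (\<lambda>x. ennreal (\<pi> x / p_obs))"

lemma integral_PX_mixture:
  assumes f[measurable]: "f \<in> borel_measurable borel" and B: "\<And>x. \<bar>f x\<bar> \<le> B"
  shows "(\<integral>x. f x \<partial>PX) = (1 - \<epsilon>) * (\<integral>x. f x \<partial>Pstar) + \<epsilon> * (\<integral>x. f x \<partial>Q)"
proof -
  \<comment> \<open>Apply \<open>nn_integral_mixture\<close> to the nonnegative function \<open>f + B\<close>.\<close>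
  have integral_shift: "(\<integral>x. f x + B \<partial>N) = (\<integral>x. f x \<partial>N) + B" and
    integral_nonneg: "0 \<le> (\<integral>x. f x + B \<partial>N)" and
    nn_integral_eq: "(\<integral>\<^sup>+x. ennreal (f x + B) \<partial>N) = ennreal (\<integral>x. f x + B \<partial>N)"
    if "real_distribution N" for N
  proof -
    interpret real_distribution N by fact
    have int: "integrable N f" using B by (intro integrable_bounded) auto
    then show "(\<integral>x. f x + B \<partial>N) = (\<integral>x. f x \<partial>N) + B" using prob_space by simp
    have nonneg: "0 \<le> f x + B" for x using B[of x] by (simp add: abs_le_iff)
    then show "0 \<le> (\<integral>x. f x + B \<partial>N)" by (intro integral_nonneg_AE) auto
    show "(\<integral>\<^sup>+x. ennreal (f x + B) \<partial>N) = ennreal (\<integral>x. f x + B \<partial>N)"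
      using int nonneg by (intro nn_integral_eq_integral) auto
  qed
  have "emeasure PX A = ennreal (1 - \<epsilon>) * emeasure Pstar A + ennreal \<epsilon> * emeasure Q A"
    if "A \<in> sets PX" for A
    using that mixture[of A] eps PX Pstar Q
    by (simp add: real_distribution_iff finite_measure.emeasure_eq_measure[OF prob_space.finite_measure]
        ennreal_plus ennreal_mult)
  then have "(\<integral>\<^sup>+x. ennreal (f x + B) \<partial>PX)
      = ennreal (1 - \<epsilon>) * (\<integral>\<^sup>+x. ennreal (f x + B) \<partial>Pstar) + ennreal \<epsilon> * (\<integral>\<^sup>+x. ennreal (f x + B) \<partial>Q)"
    using PX Pstar Q by (intro nn_integral_mixture) (auto simp: real_distribution_iff)
  then have "ennreal (\<integral>x. f x + B \<partial>PX)
      = ennreal ((1 - \<epsilon>) * (\<integral>x. f x + B \<partial>Pstar) + \<epsilon> * (\<integral>x. f x + B \<partial>Q))"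
    using eps PX Pstar Q integral_nonneg by (simp add: nn_integral_eq ennreal_plus ennreal_mult)
  then have "(\<integral>x. f x + B \<partial>PX) = (1 - \<epsilon>) * (\<integral>x. f x + B \<partial>Pstar) + \<epsilon> * (\<integral>x. f x + B \<partial>Q)"
    using eps PX Pstar Q integral_nonneg by (subst (asm) ennreal_inj) auto
  then have "(\<integral>x. f x \<partial>PX) + B = (1 - \<epsilon>) * ((\<integral>x. f x \<partial>Pstar) + B) + \<epsilon> * ((\<integral>x. f x \<partial>Q) + B)"
    by (simp only: integral_shift[OF PX] integral_shift[OF Pstar] integral_shift[OF Q])
  then show ?thesis by (simp add: algebra_simps)
qed

lemma integral_pi_bounds: "real_distribution N \<Longrightarrow> 0 \<le> (\<integral>x. \<pi> x \<partial>N) \<and> (\<integral>x. \<pi> x \<partial>N) \<le> 1"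
  using pi_range prob_space.abs_integral_le_bound[of N \<pi> 1]
  by (auto intro!: integral_nonneg_AE simp: real_distribution_iff real_distribution.borel_measurable_eq abs_le_iff)

lemma p_obs_eq: "p_obs = (1 - \<epsilon>) * pi_star + \<epsilon> * pi_Q"
  unfolding p_obs_def pi_star_def pi_Q_def using pi_range by (intro integral_PX_mixture[where B=1]) auto

lemma pi_star_pos: "pi_star > 0" using integral_pi_Pstar_pos by (simp add: pi_star_def)
lemma pi_star_le_1: "pi_star \<le> 1" using integral_pi_bounds[OF Pstar] by (simp add: pi_star_def)
lemma pi_Q_bounds: "0 \<le> pi_Q" "pi_Q \<le> 1" using integral_pi_bounds[OF Q] by (auto simp: pi_Q_def)

lemma p_obs_ge: "(1 - \<epsilon>) * pi_star \<le> p_obs"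
  using p_obs_eq pi_Q_bounds eps by simp

lemma p_obs_pos: "p_obs > 0"
  using p_obs_ge mult_pos_pos[of "1 - \<epsilon>" pi_star] eps pi_star_pos by linarith

lemma integral_obs_distr:
  "f \<in> borel_measurable borel \<Longrightarrow> (\<integral>x. f x \<partial>obs_distr) = (\<integral>x. \<pi> x / p_obs * f x \<partial>PX)"
  unfolding obs_distr_def using PX p_obs_pos pi_range
  by (subst integral_density) (auto simp: real_distribution.borel_measurable_eq)

lemma real_distribution_obs_distr: "real_distribution obs_distr"
proof -
  interpret PX: real_distribution PX by (rule PX)
  have "emeasure obs_distr (space obs_distr) = (\<integral>\<^sup>+x. ennreal (\<pi> x / p_obs) \<partial>PX)"
    unfolding obs_distr_def by (subst emeasure_density) auto
  also have "\<dots> = ennreal (\<integral>x. \<pi> x / p_obs \<partial>PX)"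
    using p_obs_pos pi_range
    by (intro nn_integral_eq_integral PX.integrable_bounded[where B="1 / p_obs"]) (auto simp: divide_right_mono)
  also have "\<dots> = 1" using p_obs_pos by (simp add: p_obs_def)
  finally show ?thesis
    by (auto simp: real_distribution_iff obs_distr_def intro!: prob_spaceI)
qed

lemma integral_obs_distr_mixture:
  assumes f[measurable]: "f \<in> borel_measurable borel" and B: "\<And>x. \<bar>f x\<bar> \<le> B"
  shows "(\<integral>x. f x \<partial>obs_distr)
    = ((1 - \<epsilon>) * (\<integral>x. \<pi> x * f x \<partial>Pstar) + \<epsilon> * (\<integral>x. \<pi> x * f x \<partial>Q)) / p_obs"
proof -
  have "\<bar>\<pi> x / p_obs * f x\<bar> \<le> 1 / p_obs * B" for x
  proof -
    have "\<pi> x * \<bar>f x\<bar> \<le> 1 * B" using pi_range[of x] B[of x] by (intro mult_mono) auto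
    then show ?thesis using pi_range[of x] p_obs_pos by (simp add: abs_mult divide_right_mono)
  qed
  then have "(\<integral>x. \<pi> x / p_obs * f x \<partial>PX)
      = (1 - \<epsilon>) * (\<integral>x. \<pi> x / p_obs * f x \<partial>Pstar) + \<epsilon> * (\<integral>x. \<pi> x / p_obs * f x \<partial>Q)"
    by (intro integral_PX_mixture) auto
  then show ?thesis
    using p_obs_pos by (simp add: integral_obs_distr field_simps)
qed

lemma PXM_fst[measurable]: "fst \<in> borel_measurable PXM"
  by (subst measurable_cong_sets[OF PXM(2) refl]) simp

lemma PXM_snd[measurable]: "snd \<in> measurable PXM (count_space UNIV)"
  by (subst measurable_cong_sets[OF PXM(2) refl]) simp

lemma space_PXM: "space PXM = UNIV"
  using sets_eq_imp_space_eq[OF PXM(2)] by (simp add: space_pair_measure)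

lemma distr_observed_fst:
  "distr (density PXM (\<lambda>z. ennreal (of_bool (snd z)))) borel fst = density PX (\<lambda>x. ennreal (\<pi> x))"
  (is "distr ?D borel fst = _")
proof (rule measure_eqI)
  interpret PX: real_distribution PX by (rule PX)
  fix A assume "A \<in> sets (distr ?D borel fst)"
  then have A[measurable]: "A \<in> sets borel" by simp
  have "emeasure (distr ?D borel fst) A = emeasure ?D (fst -` A \<inter> space ?D)"
    by (rule emeasure_distr) simp_all
  also have "\<dots> = (\<integral>\<^sup>+z. ennreal (of_bool (snd z)) * indicator (fst -` A \<inter> space PXM) z \<partial>PXM)"
    using measurable_sets[OF PXM_fst A] by (subst emeasure_density) (auto simp: space_PXM)
  also have "\<dots> = (\<integral>\<^sup>+z. indicator (A \<times> {True}) z \<partial>PXM)"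
    by (intro nn_integral_cong) (auto simp: space_PXM indicator_def)
  also have "\<dots> = emeasure PXM (A \<times> {True})"
    using PXM(2) A by (simp add: pair_measureI)
  also have "\<dots> = ennreal (\<integral>x. \<pi> x * indicator A x \<partial>PX)"
    using PXM_observed[OF A] finite_measure.emeasure_eq_measure[OF prob_space.finite_measure[OF PXM(1)]]
    by (simp add: set_lebesgue_integral_def mult.commute)
  also have "\<dots> = (\<integral>\<^sup>+x. ennreal (\<pi> x * indicator A x) \<partial>PX)"
    using pi_range
    by (intro nn_integral_eq_integral[symmetric] PX.integrable_bounded[where B=1]) (auto simp: indicator_def)
  also have "\<dots> = emeasure (density PX (\<lambda>x. ennreal (\<pi> x))) A"
    by (auto simp: emeasure_density indicator_def intro!: nn_integral_cong)
  finally show "emeasure (distr ?D borel fst) A = emeasure (density PX (\<lambda>x. ennreal (\<pi> x))) A" .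
qed (use PX in \<open>simp add: real_distribution_iff\<close>)

lemma integral_PXM_observed:
  assumes f[measurable]: "f \<in> borel_measurable borel"
  shows "(\<integral>z. (if snd z then f (fst z) else 0) \<partial>PXM) = p_obs * (\<integral>x. f x \<partial>obs_distr)"
proof -
  have "(\<integral>z. (if snd z then f (fst z) else 0) \<partial>PXM) = (\<integral>z. of_bool (snd z) *\<^sub>R f (fst z) \<partial>PXM)"
    by (intro Bochner_Integration.integral_cong) auto
  also have "\<dots> = (\<integral>x. f x \<partial>distr (density PXM (\<lambda>z. ennreal (of_bool (snd z)))) borel fst)"
    by (simp add: integral_density integral_distr)
  also have "\<dots> = (\<integral>x. \<pi> x * f x \<partial>PX)"
    unfolding distr_observed_fst using PX pi_range
    by (subst integral_density) (auto simp: real_distribution.borel_measurable_eq)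
  also have "\<dots> = p_obs * (\<integral>x. f x \<partial>obs_distr)"
    using p_obs_pos by (simp add: integral_obs_distr[OF f] field_simps flip: integral_mult_right_zero)
  finally show ?thesis .
qed

text \<open>\<open>obs_distr - Pstar\<close> has density \<open>bias_weight_Pstar\<close> with respect to \<open>Pstar\<close> plus density
  \<open>bias_weight_Q\<close> with respect to \<open>Q\<close>; \<open>bias_tv\<close> is the total variation of this signed measure.\<close>
definition "bias_weight_Pstar x = (1 - \<epsilon>) / p_obs * \<pi> x - 1"
definition "bias_weight_Q x = \<epsilon> / p_obs * \<pi> x"
definition "bias_tv = (\<integral>x. \<bar>bias_weight_Pstar x\<bar> \<partial>Pstar) + (\<integral>x. \<bar>bias_weight_Q x\<bar> \<partial>Q)"

lemma bias_weight_measurable[measurable]: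
  "bias_weight_Pstar \<in> borel_measurable borel" "bias_weight_Q \<in> borel_measurable borel"
  unfolding bias_weight_Pstar_def[abs_def] bias_weight_Q_def[abs_def] by simp_all

lemma abs_bias_weight_Pstar_le: "\<bar>bias_weight_Pstar x\<bar> \<le> (1 - \<epsilon>) / p_obs + 1"
proof -
  have nonneg: "0 \<le> (1 - \<epsilon>) / p_obs" using eps p_obs_pos by simp
  then have "0 \<le> (1 - \<epsilon>) / p_obs * \<pi> x" by (rule mult_nonneg_nonneg) (use pi_range in auto)
  moreover have "(1 - \<epsilon>) / p_obs * \<pi> x \<le> (1 - \<epsilon>) / p_obs"
    using nonneg pi_range[of x] mult_left_mono[of "\<pi> x" 1 "(1 - \<epsilon>) / p_obs"] by simp
  ultimately
  show ?thesis unfolding bias_weight_Pstar_def by linarith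
qed

lemma abs_bias_weight_Q_le: "\<bar>bias_weight_Q x\<bar> \<le> \<epsilon> / p_obs"
  unfolding bias_weight_Q_def using pi_range[of x] mult_left_mono[of "\<pi> x" 1 "\<epsilon> / p_obs"] eps p_obs_pos
  by (simp add: abs_mult)

lemma integral_obs_distr_minus_Pstar:
  assumes f[measurable]: "f \<in> borel_measurable borel" and B: "\<And>x. \<bar>f x\<bar> \<le> B"
  shows "(\<integral>x. f x \<partial>obs_distr) - (\<integral>x. f x \<partial>Pstar)
    = (\<integral>x. bias_weight_Pstar x * f x \<partial>Pstar) + (\<integral>x. bias_weight_Q x * f x \<partial>Q)"
proof -
  interpret Pstar: real_distribution Pstar by (rule Pstar)
  have "\<bar>\<pi> x * f x\<bar> \<le> B" for x
    using pi_range[of x] B[of x] mult_right_mono[of "\<pi> x" 1 "\<bar>f x\<bar>"] by (simp add: abs_mult)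
  then have int: "integrable Pstar (\<lambda>x. \<pi> x * f x)" "integrable Pstar f"
    using B by (auto intro!: Pstar.integrable_bounded)
  have "(\<integral>x. bias_weight_Pstar x * f x \<partial>Pstar)
      = (\<integral>x. (1 - \<epsilon>) / p_obs * (\<pi> x * f x) - f x \<partial>Pstar)"
    unfolding bias_weight_Pstar_def by (simp add: algebra_simps)
  also have "\<dots> = (1 - \<epsilon>) / p_obs * (\<integral>x. \<pi> x * f x \<partial>Pstar) - (\<integral>x. f x \<partial>Pstar)"
    using int by simp
  finally show ?thesis
    unfolding integral_obs_distr_mixture[OF f B] bias_weight_Q_def using p_obs_pos
    by (simp add: field_simps)
qed

lemma abs_integral_obs_distr_minus_Pstar_le:
  assumes f[measurable]: "f \<in> borel_measurable borel" and B: "\<And>x. \<bar>f x\<bar> \<le> B"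
  shows "\<bar>(\<integral>x. f x \<partial>obs_distr) - (\<integral>x. f x \<partial>Pstar)\<bar> \<le> B * bias_tv"
proof -
  have "\<bar>\<integral>x. bias_weight_Pstar x * f x \<partial>Pstar\<bar> \<le> B * (\<integral>x. \<bar>bias_weight_Pstar x\<bar> \<partial>Pstar)"
    using Pstar B abs_bias_weight_Pstar_le
    by (intro prob_space.abs_integral_mult_le) (auto simp: real_distribution_iff real_distribution.borel_measurable_eq)
  moreover have "\<bar>\<integral>x. bias_weight_Q x * f x \<partial>Q\<bar> \<le> B * (\<integral>x. \<bar>bias_weight_Q x\<bar> \<partial>Q)"
    using Q B abs_bias_weight_Q_le
    by (intro prob_space.abs_integral_mult_le) (auto simp: real_distribution_iff real_distribution.borel_measurable_eq)
  ultimately show ?thesis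
    unfolding integral_obs_distr_minus_Pstar[OF f B] bias_tv_def by (simp add: distrib_left)
qed

lemma bias_tv_nonneg: "0 \<le> bias_tv"
  unfolding bias_tv_def by (intro add_nonneg_nonneg integral_nonneg_AE) auto

text \<open>\<open>mmd_sq\<close> is the difference of the integrals of \<open>h = \<Phi>(obs_distr) - \<Phi>(Pstar)\<close>, and
  \<open>\<bar>h\<bar> \<le> bias_tv\<close> by the same bound applied to the sections of \<open>k\<close>.\<close>
lemma mmd_obs_distr_Pstar_le: "mmd k obs_distr Pstar \<le> bias_tv"
proof -
  define h where "h x = (\<integral>y. k x y \<partial>obs_distr) - (\<integral>y. k x y \<partial>Pstar)" for x
  have h_measurable[measurable]: "h \<in> borel_measurable borel"
    unfolding h_def using real_distribution_obs_distr Pstar by simp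
  have h_bound: "\<bar>h x\<bar> \<le> bias_tv" for x
    using abs_integral_obs_distr_minus_Pstar_le[of "k x" 1] kernel_bounded unfolding h_def by simp
  have "\<bar>\<integral>y. k x y \<partial>N\<bar> \<le> 1" if "real_distribution N" for x N
    using abs_kernel_mean_le[OF that] .
  then have int: "integrable N (\<lambda>x. \<integral>y. k x y \<partial>N')"
    if "real_distribution N" "real_distribution N'" for N N'
    using that by (intro prob_space.integrable_bounded[where B=1])
      (auto simp: real_distribution_iff real_distribution.borel_measurable_eq)
  have "mmd_sq k obs_distr Pstar = (\<integral>x. h x \<partial>obs_distr) - (\<integral>x. h x \<partial>Pstar)"
    unfolding mmd_sq_kernel_inner h_def
    using int[OF real_distribution_obs_distr real_distribution_obs_distr] int[OF real_distribution_obs_distr Pstar]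
      int[OF Pstar real_distribution_obs_distr] int[OF Pstar Pstar]
      kernel_inner_commute[OF Pstar real_distribution_obs_distr]
    by (simp add: kernel_inner_def)
  also have "\<dots> \<le> bias_tv * bias_tv"
    using abs_integral_obs_distr_minus_Pstar_le[OF h_measurable h_bound] by simp
  finally show ?thesis
    unfolding mmd_def using bias_tv_nonneg by (simp add: real_le_lsqrt power2_eq_square)
qed

definition "pi_abs_dev = (\<integral>x. \<bar>\<pi> x - pi_star\<bar> \<partial>Pstar)"
definition "pi_var = (\<integral>x. (\<pi> x - pi_star)\<^sup>2 \<partial>Pstar)"

lemma abs_pi_minus_pi_star_le: "\<bar>\<pi> x - pi_star\<bar> \<le> 1"
  using pi_range[of x] pi_star_le_1 pi_star_pos by auto

lemma pi_abs_dev_le_sqrt_pi_var: "pi_abs_dev \<le> sqrt pi_var"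
proof -
  interpret Pstar: real_distribution Pstar by (rule Pstar)
  have "pi_abs_dev\<^sup>2 \<le> (\<integral>x. \<bar>\<pi> x - pi_star\<bar>\<^sup>2 \<partial>Pstar)"
    unfolding pi_abs_dev_def using abs_pi_minus_pi_star_le
    by (intro Pstar.square_integral_le_integral_square[where B=1]) auto
  then show ?thesis
    unfolding pi_var_def by (simp add: real_le_rsqrt)
qed

lemma integral_abs_bias_weight_Q: "(\<integral>x. \<bar>bias_weight_Q x\<bar> \<partial>Q) = \<epsilon> / p_obs * pi_Q"
proof -
  have "(\<integral>x. \<bar>bias_weight_Q x\<bar> \<partial>Q) = (\<integral>x. \<epsilon> / p_obs * \<pi> x \<partial>Q)"
    unfolding bias_weight_Q_def using eps p_obs_pos pi_range
    by (intro Bochner_Integration.integral_cong) (auto simp: abs_mult)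
  then show ?thesis by (simp add: pi_Q_def)
qed

lemma abs_bias_weight_Pstar_le_dev:
  "\<bar>bias_weight_Pstar x\<bar> \<le> (1 - \<epsilon>) / p_obs * \<bar>\<pi> x - pi_star\<bar> + \<epsilon> * pi_Q / p_obs"
proof -
  \<comment> \<open>Since \<open>p_obs = (1 - \<epsilon>) pi_star + \<epsilon> pi_Q\<close>, the weight on \<open>Pstar\<close> is centred at \<open>pi_star\<close>.\<close>
  have "(1 - \<epsilon>) / p_obs * pi_star + \<epsilon> * pi_Q / p_obs = 1"
    using p_obs_pos p_obs_eq by (simp add: field_simps)
  then have "bias_weight_Pstar x = (1 - \<epsilon>) / p_obs * \<pi> x - ((1 - \<epsilon>) / p_obs * pi_star + \<epsilon> * pi_Q / p_obs)"
    unfolding bias_weight_Pstar_def by simp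
  then have "bias_weight_Pstar x = (1 - \<epsilon>) / p_obs * (\<pi> x - pi_star) - \<epsilon> * pi_Q / p_obs"
    by (simp add: right_diff_distrib)
  moreover have "\<bar>(1 - \<epsilon>) / p_obs * (\<pi> x - pi_star)\<bar> = (1 - \<epsilon>) / p_obs * \<bar>\<pi> x - pi_star\<bar>"
    using eps p_obs_pos by (simp add: abs_mult)
  moreover have "0 \<le> \<epsilon> * pi_Q / p_obs" using eps p_obs_pos pi_Q_bounds by simp
  ultimately show ?thesis by linarith
qed

lemma integral_abs_bias_weight_Pstar_le:
  "(\<integral>x. \<bar>bias_weight_Pstar x\<bar> \<partial>Pstar) \<le> (1 - \<epsilon>) / p_obs * pi_abs_dev + \<epsilon> * pi_Q / p_obs"
proof -
  interpret Pstar: real_distribution Pstar by (rule Pstar)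
  have int_dev: "integrable Pstar (\<lambda>x. \<bar>\<pi> x - pi_star\<bar>)"
    using abs_pi_minus_pi_star_le by (intro Pstar.integrable_bounded[where B=1]) auto
  have "(\<integral>x. \<bar>bias_weight_Pstar x\<bar> \<partial>Pstar)
      \<le> (\<integral>x. (1 - \<epsilon>) / p_obs * \<bar>\<pi> x - pi_star\<bar> + \<epsilon> * pi_Q / p_obs \<partial>Pstar)"
  proof (rule integral_mono[OF _ _ abs_bias_weight_Pstar_le_dev])
    show "integrable Pstar (\<lambda>x. \<bar>bias_weight_Pstar x\<bar>)"
      using abs_bias_weight_Pstar_le by (intro Pstar.integrable_bounded) auto
  qed (use int_dev in simp)
  also have "\<dots> = (1 - \<epsilon>) / p_obs * pi_abs_dev + \<epsilon> * pi_Q / p_obs"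
    unfolding pi_abs_dev_def using int_dev Pstar.prob_space by simp
  finally show ?thesis .
qed

lemma bias_tv_le: "bias_tv \<le> sqrt pi_var / pi_star + 2 * \<epsilon> / (pi_star * (1 - \<epsilon>))"
proof -
  have "bias_tv \<le> (1 - \<epsilon>) / p_obs * pi_abs_dev + \<epsilon> * pi_Q / p_obs + \<epsilon> / p_obs * pi_Q"
    unfolding bias_tv_def integral_abs_bias_weight_Q using integral_abs_bias_weight_Pstar_le by linarith
  also have "\<dots> = ((1 - \<epsilon>) * pi_abs_dev + 2 * \<epsilon> * pi_Q) / p_obs"
    using p_obs_pos by (simp add: field_simps)
  also have "\<dots> \<le> ((1 - \<epsilon>) * pi_abs_dev + 2 * \<epsilon>) / ((1 - \<epsilon>) * pi_star)"
    using p_obs_ge eps pi_Q_bounds pi_star_pos mult_left_le[OF pi_Q_bounds(2) eps(1)]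
    by (intro frac_le add_left_mono mult_nonneg_nonneg) (auto intro!: integral_nonneg_AE simp: pi_abs_dev_def)
  also have "\<dots> = pi_abs_dev / pi_star + 2 * \<epsilon> / (pi_star * (1 - \<epsilon>))"
    using eps pi_star_pos by (simp add: field_simps)
  also have "\<dots> \<le> sqrt pi_var / pi_star + 2 * \<epsilon> / (pi_star * (1 - \<epsilon>))"
    using pi_abs_dev_le_sqrt_pi_var pi_star_pos by (simp add: divide_right_mono)
  finally show ?thesis .
qed

end

section \<open>The sample and its observed part\<close>

locale missing_data_sample = missing_data +
  fixes n :: nat
  assumes n_pos: "0 < n"
begin

abbreviation "sample \<equiv> PiM {..<n} (\<lambda>_. PXM)"

definition "observed s = {i. i < n \<and> snd (s i)}" for s :: "nat \<Rightarrow> real \<times> bool"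
definition "n_obs s = real (card (observed s))"
definition "n_obs_except a s = (\<Sum>i\<in>{..<n} - {a}. of_bool (snd (s i)) :: real)"
  for s :: "nat \<Rightarrow> real \<times> bool"

lemma prob_space_sample: "prob_space sample"
  using PXM(1) by (intro prob_space_PiM) auto

lemma sample_component_measurable[measurable]:
  "a < n \<Longrightarrow> (\<lambda>s. fst (s a)) \<in> borel_measurable sample"
  "a < n \<Longrightarrow> (\<lambda>s. snd (s a)) \<in> measurable sample (count_space UNIV)"
  using measurable_comp[OF measurable_component_singleton[of a "{..<n}" "\<lambda>_. PXM"] PXM_fst]
    measurable_comp[OF measurable_component_singleton[of a "{..<n}" "\<lambda>_. PXM"] PXM_snd]
  by (simp_all add: comp_def)

lemma sample_integrable:
  fixes f :: "(nat \<Rightarrow> real \<times> bool) \<Rightarrow> real"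
  shows "f \<in> borel_measurable sample \<Longrightarrow> (\<And>s. \<bar>f s\<bar> \<le> B) \<Longrightarrow> integrable sample f"
  by (rule prob_space.integrable_bounded[OF prob_space_sample]) auto

lemma n_obs_eq_sum: "n_obs s = (\<Sum>i<n. of_bool (snd (s i)))"
proof -
  have "observed s = {i\<in>{..<n}. snd (s i)}" unfolding observed_def by auto
  then have "n_obs s = (\<Sum>i\<in>{i\<in>{..<n}. snd (s i)}. 1)" unfolding n_obs_def by simp
  also have "\<dots> = (\<Sum>i<n. of_bool (snd (s i)))" by (subst sum.inter_filter) (simp_all add: of_bool_def)
  finally show ?thesis .
qed

lemma n_obs_split: "a < n \<Longrightarrow> n_obs s = n_obs_except a s + of_bool (snd (s a))"
  unfolding n_obs_eq_sum n_obs_except_def by (subst sum.remove[of _ a]) auto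

lemma n_obs_except_upd: "n_obs_except a (s(a := z)) = n_obs_except a s"
  unfolding n_obs_except_def by (intro sum.cong) auto

lemma n_obs_except_nonneg: "0 \<le> n_obs_except a s"
  unfolding n_obs_except_def by (simp add: sum_nonneg)

lemma n_obs_nonneg: "0 \<le> n_obs s"
  unfolding n_obs_def by simp

lemma n_obs_ge_1: "n_obs s \<noteq> 0 \<Longrightarrow> 1 \<le> n_obs s"
  unfolding n_obs_def by simp

lemma abs_inverse_n_obs_Suc_le: "\<bar>1 / (n_obs s + 1)\<bar> \<le> 1"
  using n_obs_nonneg[of s] by simp

lemma abs_inverse_n_obs_except_Suc_le: "\<bar>1 / (n_obs_except a s + 1)\<bar> \<le> 1"
  using n_obs_except_nonneg[of a s] by simp

lemma n_obs_measurable[measurable]: "n_obs \<in> borel_measurable sample"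
  unfolding n_obs_eq_sum[abs_def] by measurable

lemma n_obs_except_measurable[measurable]: "n_obs_except a \<in> borel_measurable sample"
  unfolding n_obs_except_def[abs_def] by measurable

lemma sample_snd_measurable:
  "f \<in> measurable sample N \<Longrightarrow> (\<lambda>p. f (snd p)) \<in> measurable (borel \<Otimes>\<^sub>M sample) N"
  using measurable_comp[OF measurable_snd, of f sample N borel] by (simp add: comp_def)

lemma integral_sample_observed:
  fixes H :: "real \<Rightarrow> (nat \<Rightarrow> real \<times> bool) \<Rightarrow> real"
  assumes a: "a < n" and H: "(\<lambda>(x, s). H x s) \<in> borel_measurable (borel \<Otimes>\<^sub>M sample)"
    and H_bound: "\<And>x s. \<bar>H x s\<bar> \<le> B"
    and H_upd: "\<And>x s z. s \<in> space sample \<Longrightarrow> H x (s(a := z)) = H x s"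
  shows "(\<integral>s. (if snd (s a) then H (fst (s a)) s else 0) \<partial>sample)
    = p_obs * (\<integral>s. (\<integral>x. H x s \<partial>obs_distr) \<partial>sample)"
proof -
  define F where "F s = (if snd (s a) then H (fst (s a)) s else 0)" for s
  have "(\<lambda>s. H (fst (s a)) s) \<in> borel_measurable sample"
    using measurable_comp[OF measurable_Pair[OF sample_component_measurable(1)[OF a] measurable_ident_sets] H]
    by (simp add: comp_def)
  then have F: "F \<in> borel_measurable sample"
    unfolding F_def using a by measurable
  have "0 \<le> B" by (rule order_trans[OF abs_ge_zero H_bound])
  then have F_bound: "\<bar>F s\<bar> \<le> B" for s unfolding F_def using H_bound by auto
  have H_section: "(\<lambda>x. H x s) \<in> borel_measurable borel" if "s \<in> space sample" for s
    using measurable_comp[OF measurable_Pair[OF measurable_ident_sets measurable_const[OF that]] H]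
    by (simp add: comp_def)
  have "(\<integral>s. F s \<partial>sample) = (\<integral>s. (\<integral>y. F (s(a := y)) \<partial>PXM) \<partial>sample)"
    using PXM(1) a F F_bound by (intro integral_PiM_redraw_coordinate[where B=B]) simp_all
  also have "\<dots> = (\<integral>s. p_obs * (\<integral>x. H x s \<partial>obs_distr) \<partial>sample)"
  proof (intro Bochner_Integration.integral_cong refl)
    fix s assume s: "s \<in> space sample"
    have "(\<integral>y. F (s(a := y)) \<partial>PXM) = (\<integral>y. (if snd y then H (fst y) s else 0) \<partial>PXM)"
      unfolding F_def by (intro Bochner_Integration.integral_cong refl) (simp add: H_upd[OF s])
    also have "\<dots> = p_obs * (\<integral>x. H x s \<partial>obs_distr)"
      by (rule integral_PXM_observed[OF H_section[OF s]])
    finally show "(\<integral>y. F (s(a := y)) \<partial>PXM) = p_obs * (\<integral>x. H x s \<partial>obs_distr)" .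
  qed
  finally show ?thesis unfolding F_def by simp
qed

text \<open>Leave-one-out: given that \<open>a\<close> is observed, \<open>n_obs s = n_obs_except a s + 1\<close>, and the
  event is independent of \<open>n_obs_except a s\<close>.\<close>
lemma expectation_observed_div_n_obs_ge:
  assumes a: "a < n"
  shows "p_obs * (\<integral>s. 1 / (n_obs s + 1) \<partial>sample) \<le> (\<integral>s. of_bool (snd (s a)) / n_obs s \<partial>sample)"
proof -
  have "(\<integral>s. of_bool (snd (s a)) / n_obs s \<partial>sample)
      = (\<integral>s. (if snd (s a) then 1 / (n_obs_except a s + 1) else 0) \<partial>sample)"
    by (intro Bochner_Integration.integral_cong refl) (simp add: n_obs_split[OF a])
  also have "\<dots> = p_obs * (\<integral>s. 1 / (n_obs_except a s + 1) \<partial>sample)"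
    using abs_inverse_n_obs_except_Suc_le real_distribution_obs_distr
    by (subst integral_sample_observed[OF a, where B=1])
      (auto intro!: sample_snd_measurable simp: n_obs_except_upd real_distribution_iff prob_space.prob_space)
  finally have "(\<integral>s. of_bool (snd (s a)) / n_obs s \<partial>sample)
      = p_obs * (\<integral>s. 1 / (n_obs_except a s + 1) \<partial>sample)" .
  moreover have "(\<integral>s. 1 / (n_obs s + 1) \<partial>sample) \<le> (\<integral>s. 1 / (n_obs_except a s + 1) \<partial>sample)"
  proof (rule integral_mono)
    show "integrable sample (\<lambda>s. 1 / (n_obs s + 1))"
      using abs_inverse_n_obs_Suc_le by (intro sample_integrable[where B=1]) auto
    show "integrable sample (\<lambda>s. 1 / (n_obs_except a s + 1))"
      using abs_inverse_n_obs_except_Suc_le by (intro sample_integrable[where B=1]) auto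
    show "1 / (n_obs s + 1) \<le> 1 / (n_obs_except a s + 1)" for s
      using n_obs_split[OF a, of s] n_obs_except_nonneg[of a s]
      by (cases "snd (s a)") (simp_all add: frac_le)
  qed
  ultimately show ?thesis using p_obs_pos by simp
qed

lemma expectation_inverse_n_obs_Suc_le: "real n * p_obs * (\<integral>s. 1 / (n_obs s + 1) \<partial>sample) \<le> 1"
proof -
  interpret sample: prob_space sample by (rule prob_space_sample)
  have ratio_bound: "\<bar>of_bool (snd (s a)) / n_obs s\<bar> \<le> 1" for a s
    using n_obs_ge_1[of s] by (cases "n_obs s = 0") (auto simp: n_obs_nonneg)
  have int_ratio: "integrable sample (\<lambda>s. of_bool (snd (s a)) / n_obs s)" if a: "a < n" for a
    by (rule sample_integrable[OF _ ratio_bound]) (use a in measurable)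
  have "real n * p_obs * (\<integral>s. 1 / (n_obs s + 1) \<partial>sample) = (\<Sum>a<n. p_obs * (\<integral>s. 1 / (n_obs s + 1) \<partial>sample))"
    by simp
  also have "\<dots> \<le> (\<Sum>a<n. \<integral>s. of_bool (snd (s a)) / n_obs s \<partial>sample)"
    using expectation_observed_div_n_obs_ge by (intro sum_mono) auto
  also have "\<dots> = (\<integral>s. (\<Sum>a<n. of_bool (snd (s a)) / n_obs s) \<partial>sample)"
    using int_ratio by (subst Bochner_Integration.integral_sum) auto
  also have "\<dots> \<le> 1"
  proof (rule sample.integral_le_const)
    show "integrable sample (\<lambda>s. \<Sum>a<n. of_bool (snd (s a)) / n_obs s)"
      using int_ratio by auto
    have "(\<Sum>a<n. of_bool (snd (s a)) / n_obs s) = n_obs s / n_obs s" for s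
      unfolding sum_divide_distrib[symmetric] n_obs_eq_sum ..
    then show "AE s in sample. (\<Sum>a<n. of_bool (snd (s a)) / n_obs s) \<le> 1"
      by (intro AE_I2) simp
  qed
  finally show ?thesis .
qed

section \<open>The empirical deviation of the observed sample\<close>

definition "obs_kernel_mean x = (\<integral>y. k x y \<partial>obs_distr)"
definition "centered_kernel x y =
  k x y - obs_kernel_mean x - obs_kernel_mean y + kernel_inner k obs_distr obs_distr"

text \<open>\<open>emp_mmd_sq s\<close> is the squared MMD between the empirical measure of the observed values and
  \<open>obs_distr\<close> (\<open>emp_mmd_sq_eq_gram\<close> below).\<close>
definition "emp_mmd_sq s =
  (\<Sum>a\<in>observed s. \<Sum>b\<in>observed s. centered_kernel (fst (s a)) (fst (s b))) / (n_obs s)\<^sup>2"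
definition "emp_term a b s =
  (if snd (s a) \<and> snd (s b) then centered_kernel (fst (s a)) (fst (s b)) else 0) / (n_obs s)\<^sup>2"

lemma obs_kernel_mean_measurable[measurable]: "obs_kernel_mean \<in> borel_measurable borel"
  unfolding obs_kernel_mean_def[abs_def] using real_distribution_obs_distr by simp

lemma abs_obs_kernel_mean_le: "\<bar>obs_kernel_mean x\<bar> \<le> 1"
  unfolding obs_kernel_mean_def using abs_kernel_mean_le real_distribution_obs_distr by simp

lemma centered_kernel_measurable[measurable]:
  "(\<lambda>(x, y). centered_kernel x y) \<in> borel_measurable (borel \<Otimes>\<^sub>M borel)"
  unfolding centered_kernel_def by measurable

lemma centered_kernel_measurable_comp:
  "f \<in> borel_measurable N \<Longrightarrow> g \<in> borel_measurable N \<Longrightarrow> (\<lambda>s. centered_kernel (f s) (g s)) \<in> borel_measurable N"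
  using measurable_comp[OF measurable_Pair centered_kernel_measurable, of f N g] by (simp add: comp_def)

lemma abs_centered_kernel_le: "\<bar>centered_kernel x y\<bar> \<le> 4"
  using kernel_bounded[of x y] abs_obs_kernel_mean_le[of x] abs_obs_kernel_mean_le[of y]
    abs_kernel_inner_le[OF real_distribution_obs_distr real_distribution_obs_distr]
  unfolding centered_kernel_def by (simp add: abs_le_iff)

lemma integral_obs_kernel_mean: "(\<integral>x. obs_kernel_mean x \<partial>obs_distr) = kernel_inner k obs_distr obs_distr"
  unfolding kernel_inner_def obs_kernel_mean_def ..

lemma integrable_obs_distr:
  fixes f :: "real \<Rightarrow> real"
  shows "f \<in> borel_measurable borel \<Longrightarrow> (\<And>x. \<bar>f x\<bar> \<le> B) \<Longrightarrow> integrable obs_distr f"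
  using real_distribution_obs_distr
  by (intro prob_space.integrable_bounded[where B=B]) (auto simp: real_distribution_iff real_distribution.borel_measurable_eq)

lemma integral_centered_kernel_left: "(\<integral>x. centered_kernel x y \<partial>obs_distr) = 0"
proof -
  interpret obs: real_distribution obs_distr by (rule real_distribution_obs_distr)
  have "(\<integral>x. k x y \<partial>obs_distr) = obs_kernel_mean y"
    unfolding obs_kernel_mean_def by (subst kernel_commute) rule
  moreover have "integrable obs_distr (\<lambda>x. k x y)" "integrable obs_distr obs_kernel_mean"
    using kernel_bounded abs_obs_kernel_mean_le by (auto intro!: integrable_obs_distr[where B=1])
  ultimately show ?thesis
    unfolding centered_kernel_def using integral_obs_kernel_mean obs.prob_space by simp
qed

lemma integral_centered_kernel_diag_le: "(\<integral>x. centered_kernel x x \<partial>obs_distr) \<le> 1"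
proof -
  interpret obs: real_distribution obs_distr by (rule real_distribution_obs_distr)
  have "integrable obs_distr (\<lambda>x. k x x)" "integrable obs_distr obs_kernel_mean"
    using kernel_bounded abs_obs_kernel_mean_le by (auto intro!: integrable_obs_distr[where B=1])
  then have "(\<integral>x. centered_kernel x x \<partial>obs_distr) = (\<integral>x. k x x \<partial>obs_distr) - kernel_inner k obs_distr obs_distr"
    unfolding centered_kernel_def using integral_obs_kernel_mean obs.prob_space by simp
  moreover have "(\<integral>x. k x x \<partial>obs_distr) \<le> 1"
    using obs.abs_integral_le_bound[of "\<lambda>x. k x x" 1] kernel_bounded by (simp add: abs_le_iff)
  moreover have "0 \<le> kernel_inner k obs_distr obs_distr"
    using kernel_gram_nonneg[of 1 "\<lambda>_. obs_distr" "\<lambda>_. 1"] real_distribution_obs_distr by simp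
  ultimately show ?thesis by simp
qed

lemma emp_mmd_sq_eq_sum_emp_term: "emp_mmd_sq s = (\<Sum>a<n. \<Sum>b<n. emp_term a b s)"
proof -
  have sum_observed: "(\<Sum>a\<in>observed s. f a) = (\<Sum>a<n. if snd (s a) then f a else 0)" for f :: "nat \<Rightarrow> real"
  proof -
    have "{a\<in>{..<n}. snd (s a)} = observed s" unfolding observed_def by auto
    then show ?thesis using sum.inter_filter[of "{..<n}" f "\<lambda>a. snd (s a)"] by simp
  qed
  show ?thesis
    unfolding emp_mmd_sq_def emp_term_def sum_divide_distrib[symmetric] sum_observed
    by (intro arg_cong2[where f="(/)"] sum.cong refl) auto
qed

lemma emp_term_measurable[measurable]: "a < n \<Longrightarrow> b < n \<Longrightarrow> emp_term a b \<in> borel_measurable sample"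
  unfolding emp_term_def[abs_def]
  by (intro borel_measurable_divide measurable_If centered_kernel_measurable_comp borel_measurable_power) auto

lemma abs_divide_le_abs: "1 \<le> d \<Longrightarrow> \<bar>y / d\<bar> \<le> \<bar>y :: real\<bar>"
  by (simp add: abs_divide divide_le_eq mult_le_cancel_left1)

lemma abs_emp_term_le: "\<bar>emp_term a b s\<bar> \<le> 4"
proof (cases "n_obs s = 0")
  case False
  then have "1 \<le> (n_obs s)\<^sup>2" using n_obs_ge_1[OF False] by (simp add: one_le_power)
  then have "\<bar>emp_term a b s\<bar> \<le> \<bar>if snd (s a) \<and> snd (s b) then centered_kernel (fst (s a)) (fst (s b)) else 0\<bar>"
    unfolding emp_term_def by (rule abs_divide_le_abs)
  also have "\<dots> \<le> 4" using abs_centered_kernel_le by auto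
  finally show ?thesis .
qed (simp add: emp_term_def)

lemma abs_divide_n_obs_except_Suc_sq_le: "\<bar>y / (n_obs_except a s + 1)\<^sup>2\<bar> \<le> \<bar>y\<bar>"
  using n_obs_except_nonneg[of a s] by (intro abs_divide_le_abs) (simp add: one_le_power)

lemma integral_of_bool_div_n_obs_sq:
  assumes a: "a < n"
  shows "(\<integral>s. of_bool (snd (s a)) / (n_obs s)\<^sup>2 \<partial>sample) = p_obs * (\<integral>s. 1 / (n_obs_except a s + 1)\<^sup>2 \<partial>sample)"
proof -
  have "(\<integral>s. of_bool (snd (s a)) / (n_obs s)\<^sup>2 \<partial>sample)
      = (\<integral>s. (if snd (s a) then 1 / (n_obs_except a s + 1)\<^sup>2 else 0) \<partial>sample)"
    by (intro Bochner_Integration.integral_cong refl) (simp add: n_obs_split[OF a])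
  also have "\<dots> = p_obs * (\<integral>s. 1 / (n_obs_except a s + 1)\<^sup>2 \<partial>sample)"
  proof (subst integral_sample_observed[OF a, where B=1])
    show "(\<lambda>(x, s). 1 / (n_obs_except a s + 1)\<^sup>2) \<in> borel_measurable (borel \<Otimes>\<^sub>M sample)"
      unfolding case_prod_beta' using sample_snd_measurable[OF n_obs_except_measurable[of a]] by measurable
    show "\<bar>1 / (n_obs_except a s + 1)\<^sup>2\<bar> \<le> 1" for s
      using abs_divide_n_obs_except_Suc_sq_le[of 1 a s] by simp
  qed (use real_distribution_obs_distr in \<open>simp_all add: n_obs_except_upd real_distribution_iff prob_space.prob_space\<close>)
  finally show ?thesis .
qed

text \<open>Independence kills the off-diagonal terms: integrating out the observation \<open>a\<close>
  integrates \<open>centered_kernel\<close> in its first argument against \<open>obs_distr\<close>.\<close>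
lemma integral_emp_term_off_diagonal:
  assumes a: "a < n" and b: "b < n" and ab: "a \<noteq> b"
  shows "(\<integral>s. emp_term a b s \<partial>sample) = 0"
proof -
  define H where "H x s = (if snd (s b) then centered_kernel x (fst (s b)) else 0) / (n_obs_except a s + 1)\<^sup>2" for x s
  have "(\<integral>s. emp_term a b s \<partial>sample) = (\<integral>s. (if snd (s a) then H (fst (s a)) s else 0) \<partial>sample)"
    by (intro Bochner_Integration.integral_cong refl) (simp add: emp_term_def H_def n_obs_split[OF a])
  also have "\<dots> = p_obs * (\<integral>s. (\<integral>x. H x s \<partial>obs_distr) \<partial>sample)"
  proof (rule integral_sample_observed[OF a, where B=4])
    have "(\<lambda>p. centered_kernel (fst p) (fst (snd p b))) \<in> borel_measurable (borel \<Otimes>\<^sub>M sample)"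
      using sample_snd_measurable[OF sample_component_measurable(1)[OF b]]
      by (intro centered_kernel_measurable_comp) auto
    moreover have "Measurable.pred (borel \<Otimes>\<^sub>M sample) (\<lambda>p. snd (snd p b))"
      using sample_snd_measurable[OF sample_component_measurable(2)[OF b]]
      by (simp add: pred_def measurable_count_space_eq2)
    ultimately show "(\<lambda>(x, s). H x s) \<in> borel_measurable (borel \<Otimes>\<^sub>M sample)"
      unfolding H_def case_prod_beta' using sample_snd_measurable[OF n_obs_except_measurable[of a]]
      by measurable
    show "\<bar>H x s\<bar> \<le> 4" for x s
    proof -
      have "\<bar>H x s\<bar> \<le> \<bar>if snd (s b) then centered_kernel x (fst (s b)) else 0\<bar>"
        unfolding H_def by (rule abs_divide_n_obs_except_Suc_sq_le)
      also have "\<dots> \<le> 4" using abs_centered_kernel_le by simp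
      finally show ?thesis .
    qed
    show "H x (s(a := z)) = H x s" for x s z
      unfolding H_def using ab by (simp add: n_obs_except_upd)
  qed
  also have "\<dots> = 0"
  proof -
    have "(\<integral>x. H x s \<partial>obs_distr) = 0" for s
      unfolding H_def by (cases "snd (s b)") (simp_all add: integral_centered_kernel_left)
    then show ?thesis by simp
  qed
  finally show ?thesis .
qed

lemma integral_emp_term_diagonal:
  assumes a: "a < n"
  shows "(\<integral>s. emp_term a a s \<partial>sample)
    = (\<integral>x. centered_kernel x x \<partial>obs_distr) * (\<integral>s. of_bool (snd (s a)) / (n_obs s)\<^sup>2 \<partial>sample)"
proof -
  define H where "H x s = centered_kernel x x * (1 / (n_obs_except a s + 1)\<^sup>2)" for x s
  have "(\<integral>s. emp_term a a s \<partial>sample) = (\<integral>s. (if snd (s a) then H (fst (s a)) s else 0) \<partial>sample)"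
    by (intro Bochner_Integration.integral_cong refl) (simp add: emp_term_def H_def n_obs_split[OF a])
  also have "\<dots> = p_obs * (\<integral>s. (\<integral>x. H x s \<partial>obs_distr) \<partial>sample)"
  proof (rule integral_sample_observed[OF a, where B=4])
    have "(\<lambda>p. centered_kernel (fst p) (fst p)) \<in> borel_measurable (borel \<Otimes>\<^sub>M sample)"
      by (intro centered_kernel_measurable_comp) auto
    then show "(\<lambda>(x, s). H x s) \<in> borel_measurable (borel \<Otimes>\<^sub>M sample)"
      unfolding H_def case_prod_beta' using sample_snd_measurable[OF n_obs_except_measurable[of a]]
      by measurable
    show "\<bar>H x s\<bar> \<le> 4" for x s
      using abs_divide_n_obs_except_Suc_sq_le abs_centered_kernel_le unfolding H_def
      by (simp only: times_divide_eq_right mult_1_right) (rule order_trans)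
    show "H x (s(a := z)) = H x s" for x s z
      unfolding H_def by (simp add: n_obs_except_upd)
  qed
  also have "\<dots> = (\<integral>x. centered_kernel x x \<partial>obs_distr) * (p_obs * (\<integral>s. 1 / (n_obs_except a s + 1)\<^sup>2 \<partial>sample))"
    unfolding H_def by (simp only: integral_mult_left_zero integral_mult_right_zero) simp
  finally show ?thesis unfolding integral_of_bool_div_n_obs_sq[OF a] .
qed

lemma expectation_emp_mmd_sq_le: "(\<integral>s. emp_mmd_sq s \<partial>sample) \<le> (\<integral>s. 1 / n_obs s \<partial>sample)"
proof -
  have int_term: "integrable sample (emp_term a b)" if "a < n" "b < n" for a b
    using that abs_emp_term_le by (intro sample_integrable[where B=4]) auto
  have int_row: "integrable sample (\<lambda>s. \<Sum>b<n. emp_term a b s)" if "a < n" for a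
    using int_term that by (intro Bochner_Integration.integrable_sum) auto
  have int_ratio: "integrable sample (\<lambda>s. of_bool (snd (s a)) / (n_obs s)\<^sup>2)" if a: "a < n" for a
  proof (rule sample_integrable[where B=1])
    show "\<bar>of_bool (snd (s a)) / (n_obs s)\<^sup>2\<bar> \<le> 1" for s
      using n_obs_ge_1[of s] by (cases "n_obs s = 0") (auto simp: divide_le_eq one_le_power)
  qed (use a in measurable)
  have "(\<integral>s. emp_mmd_sq s \<partial>sample) = (\<Sum>a<n. \<integral>s. (\<Sum>b<n. emp_term a b s) \<partial>sample)"
    unfolding emp_mmd_sq_eq_sum_emp_term using int_row by (intro Bochner_Integration.integral_sum) auto
  also have "\<dots> = (\<Sum>a<n. \<Sum>b<n. \<integral>s. emp_term a b s \<partial>sample)"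
    using int_term by (intro sum.cong refl Bochner_Integration.integral_sum) auto
  also have "\<dots> = (\<Sum>a<n. \<integral>s. emp_term a a s \<partial>sample)"
  proof (rule sum.cong[OF refl])
    fix a assume a: "a \<in> {..<n}"
    have "(\<Sum>b<n. \<integral>s. emp_term a b s \<partial>sample) = (\<Sum>b<n. if b = a then \<integral>s. emp_term a a s \<partial>sample else 0)"
      using a integral_emp_term_off_diagonal by (intro sum.cong) auto
    then show "(\<Sum>b<n. \<integral>s. emp_term a b s \<partial>sample) = (\<integral>s. emp_term a a s \<partial>sample)"
      using a by simp
  qed
  also have "\<dots> = (\<Sum>a<n. (\<integral>x. centered_kernel x x \<partial>obs_distr) * (\<integral>s. of_bool (snd (s a)) / (n_obs s)\<^sup>2 \<partial>sample))"
    by (simp add: integral_emp_term_diagonal)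
  also have "\<dots> = (\<integral>x. centered_kernel x x \<partial>obs_distr) * (\<integral>s. (\<Sum>a<n. of_bool (snd (s a)) / (n_obs s)\<^sup>2) \<partial>sample)"
    by (subst Bochner_Integration.integral_sum) (auto simp: sum_distrib_left int_ratio)
  also have "(\<integral>s. (\<Sum>a<n. of_bool (snd (s a)) / (n_obs s)\<^sup>2) \<partial>sample) = (\<integral>s. 1 / n_obs s \<partial>sample)"
  proof (intro Bochner_Integration.integral_cong refl)
    fix s
    have "(\<Sum>a<n. of_bool (snd (s a)) / (n_obs s)\<^sup>2) = n_obs s / (n_obs s)\<^sup>2"
      unfolding sum_divide_distrib[symmetric] n_obs_eq_sum ..
    then show "(\<Sum>a<n. of_bool (snd (s a)) / (n_obs s)\<^sup>2) = 1 / n_obs s"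
      by (simp add: power2_eq_square)
  qed
  also have "(\<integral>x. centered_kernel x x \<partial>obs_distr) * (\<integral>s. 1 / n_obs s \<partial>sample) \<le> (\<integral>s. 1 / n_obs s \<partial>sample)"
  proof -
    have "0 \<le> (\<integral>s. 1 / n_obs s \<partial>sample)" using n_obs_nonneg by (intro integral_nonneg_AE) auto
    then show ?thesis using mult_right_mono[OF integral_centered_kernel_diag_le] by simp
  qed
  finally show ?thesis .
qed

definition atoms :: "real measure \<Rightarrow> (nat \<Rightarrow> real \<times> bool) \<Rightarrow> nat \<Rightarrow> real measure" where
  "atoms R s i = (if i < n then return borel (fst (s i)) else if i = n then obs_distr
    else if i = Suc n then Pstar else R)"

lemma kernel_family_atoms: "real_distribution R \<Longrightarrow> kernel_family k (atoms R s) (n + 3)"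
  by (intro kernel_family.intro bounded_pd_kernel_axioms)
    (auto simp: kernel_family_axioms_def atoms_def real_distribution_return real_distribution_obs_distr Pstar)

lemma atoms_simps:
  "atoms R s n = obs_distr" "atoms R s (n + 1) = Pstar" "atoms R s (n + 2) = R"
  "i \<in> observed s \<Longrightarrow> atoms R s i = return borel (fst (s i))"
  by (simp_all add: atoms_def observed_def)

lemma kernel_inner_obs_distr_return: "kernel_inner k obs_distr (return borel x) = obs_kernel_mean x"
  unfolding kernel_inner_def obs_kernel_mean_def
  by (simp add: integral_return kernel_commute[of _ x])

lemma emp_mmd_sq_eq_gram:
  assumes R: "real_distribution R" and N: "n_obs s \<noteq> 0"
  defines "p \<equiv> uniform_weights (observed s)"
  shows "emp_mmd_sq s = kernel_family.gram k (atoms R s) (n + 3) (\<lambda>i. p i - basis n i) (\<lambda>i. p i - basis n i)"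
proof -
  interpret F: kernel_family k "atoms R s" "n + 3" by (rule kernel_family_atoms[OF R])
  define x where "x i = fst (s i)" for i
  have S: "observed s \<subseteq> {..<n + 3}" unfolding observed_def by auto
  have card: "real (card (observed s)) = n_obs s" unfolding n_obs_def ..
  have gram_pp: "F.gram p p = (\<Sum>i\<in>observed s. \<Sum>j\<in>observed s. k (x i) (x j)) / (n_obs s)\<^sup>2"
    unfolding p_def F.gram_uniform_weights[OF S] card
    by (simp add: atoms_simps x_def kernel_inner_return_return)
  have "F.gram (basis n) p = (\<Sum>i\<in>observed s. kernel_inner k (atoms R s n) (atoms R s i)) / n_obs s"
    unfolding p_def card[symmetric] by (rule F.gram_basis_uniform_weights[OF S]) simp
  then have gram_basis_p: "F.gram (basis n) p = (\<Sum>i\<in>observed s. obs_kernel_mean (x i)) / n_obs s"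
    by (simp add: atoms_simps x_def kernel_inner_obs_distr_return)
  have gram_basis_basis: "F.gram (basis n) (basis n) = kernel_inner k obs_distr obs_distr"
    using F.gram_basis_basis[of n n] by (simp add: atoms_simps)
  have "(\<Sum>a\<in>observed s. \<Sum>b\<in>observed s. centered_kernel (x a) (x b))
      = (\<Sum>a\<in>observed s. (\<Sum>b\<in>observed s. k (x a) (x b)) - n_obs s * obs_kernel_mean (x a)
          - (\<Sum>b\<in>observed s. obs_kernel_mean (x b)) + n_obs s * kernel_inner k obs_distr obs_distr)"
    unfolding card[symmetric] by (intro sum.cong refl) (simp add: centered_kernel_def sum.distrib sum_subtractf)
  also have "\<dots> = (\<Sum>a\<in>observed s. \<Sum>b\<in>observed s. k (x a) (x b))
      - 2 * n_obs s * (\<Sum>a\<in>observed s. obs_kernel_mean (x a))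
      + n_obs s * n_obs s * kernel_inner k obs_distr obs_distr"
    unfolding card[symmetric] by (simp add: sum.distrib sum_subtractf sum_distrib_left[symmetric])
  finally have "emp_mmd_sq s = ((\<Sum>a\<in>observed s. \<Sum>b\<in>observed s. k (x a) (x b))
      - 2 * n_obs s * (\<Sum>a\<in>observed s. obs_kernel_mean (x a))
      + n_obs s * n_obs s * kernel_inner k obs_distr obs_distr) / (n_obs s)\<^sup>2"
    unfolding emp_mmd_sq_def x_def by simp
  also have "\<dots> = F.gram p p - 2 * F.gram (basis n) p + F.gram (basis n) (basis n)"
    unfolding gram_pp gram_basis_p gram_basis_basis using N by (simp add: field_simps power2_eq_square)
  finally show ?thesis by (simp only: F.gram_diff_diff F.gram_commute[of p "basis n"])
qed

lemma emp_mmd_sq_nonneg: "0 \<le> emp_mmd_sq s"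
proof (cases "n_obs s = 0")
  case False
  interpret F: kernel_family k "atoms Pstar s" "n + 3" by (rule kernel_family_atoms[OF Pstar])
  show ?thesis unfolding emp_mmd_sq_eq_gram[OF Pstar False] by (rule F.gram_nonneg)
qed (simp add: emp_mmd_sq_def)

lemma mmd_le_of_better_fit:
  assumes R: "real_distribution R" and N: "n_obs s \<noteq> 0"
    and fit: "(\<Sum>i\<in>observed s. mmd_sq k R (return borel (fst (s i))))
      \<le> (\<Sum>i\<in>observed s. mmd_sq k Pstar (return borel (fst (s i))))"
  shows "mmd k R Pstar \<le> 2 * sqrt (emp_mmd_sq s) + 2 * mmd k obs_distr Pstar"
proof -
  interpret F: kernel_family k "atoms R s" "n + 3" by (rule kernel_family_atoms[OF R])
  have S: "observed s \<subseteq> {..<n + 3}" "observed s \<noteq> {}"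
    using N unfolding observed_def n_obs_def by auto
  have observed_atoms: "(\<Sum>i\<in>observed s. mmd_sq k A (atoms R s i))
      = (\<Sum>i\<in>observed s. mmd_sq k A (return borel (fst (s i))))" for A
    by (intro sum.cong refl) (simp add: atoms_simps(4))
  have "(\<Sum>i\<in>observed s. mmd_sq k (atoms R s (n + 2)) (atoms R s i))
      \<le> (\<Sum>i\<in>observed s. mmd_sq k (atoms R s (n + 1)) (atoms R s i))"
    using fit unfolding atoms_simps(2,3) observed_atoms .
  then have "mmd k (atoms R s (n + 2)) (atoms R s (n + 1))
      \<le> 2 * F.gram_norm (\<lambda>i. uniform_weights (observed s) i - basis n i) + 2 * mmd k (atoms R s n) (atoms R s (n + 1))"
    by (intro F.mmd_le_of_empirical_minimizer[OF S]) auto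
  then show ?thesis
    unfolding atoms_simps F.gram_norm_def emp_mmd_sq_eq_gram[OF R N] .
qed

text \<open>By convention \<open>emp_dev s = 1\<close> when nothing is observed, where only \<open>mmd_le_2\<close> is available.\<close>
definition "emp_dev s = (if n_obs s = 0 then 1 else sqrt (emp_mmd_sq s))"

lemma emp_mmd_sq_measurable[measurable]: "emp_mmd_sq \<in> borel_measurable sample"
  unfolding emp_mmd_sq_eq_sum_emp_term[abs_def] by measurable

lemma emp_dev_measurable[measurable]: "emp_dev \<in> borel_measurable sample"
  unfolding emp_dev_def[abs_def] by measurable

lemma emp_dev_nonneg: "0 \<le> emp_dev s"
  unfolding emp_dev_def using emp_mmd_sq_nonneg[of s] by simp

lemma abs_emp_mmd_sq_le: "\<bar>emp_mmd_sq s\<bar> \<le> 4 * (real n)\<^sup>2"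
proof -
  have "\<bar>emp_mmd_sq s\<bar> \<le> (\<Sum>a<n. \<Sum>b<n. \<bar>emp_term a b s\<bar>)"
    unfolding emp_mmd_sq_eq_sum_emp_term by (rule order_trans[OF sum_abs sum_mono[OF sum_abs]])
  also have "\<dots> \<le> (\<Sum>a<n. \<Sum>b<n. 4)" by (intro sum_mono abs_emp_term_le)
  finally show ?thesis by (simp add: power2_eq_square)
qed

lemma abs_emp_dev_le: "\<bar>emp_dev s\<bar> \<le> 1 + 2 * real n"
proof -
  have "sqrt (emp_mmd_sq s) \<le> sqrt (4 * (real n)\<^sup>2)"
    using abs_emp_mmd_sq_le[of s] by (intro real_sqrt_le_mono) simp
  also have "\<dots> = 2 * real n" by (simp add: real_sqrt_mult)
  finally show ?thesis unfolding emp_dev_def using emp_mmd_sq_nonneg[of s] by auto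
qed

lemma power2_emp_dev: "(emp_dev s)\<^sup>2 = of_bool (n_obs s = 0) + emp_mmd_sq s"
proof (cases "n_obs s = 0")
  case True
  then show ?thesis by (simp add: emp_dev_def emp_mmd_sq_def)
next
  case False
  then show ?thesis using emp_mmd_sq_nonneg[of s] by (simp add: emp_dev_def)
qed

lemma expectation_power2_emp_dev_le: "(\<integral>s. (emp_dev s)\<^sup>2 \<partial>sample) \<le> 2 / (real n * p_obs)"
proof -
  have int_inv: "integrable sample (\<lambda>s. 1 / n_obs s)"
    by (rule sample_integrable[where B=1]) (auto simp: n_obs_nonneg n_obs_ge_1 divide_le_eq_1)
  have int_inv_Suc: "integrable sample (\<lambda>s. 1 / (n_obs s + 1))"
    using abs_inverse_n_obs_Suc_le by (intro sample_integrable[where B=1]) auto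
  have int_none: "integrable sample (\<lambda>s. of_bool (n_obs s = 0) :: real)"
    by (rule sample_integrable[where B=1]) auto
  have int_emp: "integrable sample emp_mmd_sq"
    using abs_emp_mmd_sq_le by (intro sample_integrable) auto
  have "(\<integral>s. (emp_dev s)\<^sup>2 \<partial>sample) = (\<integral>s. of_bool (n_obs s = 0) \<partial>sample) + (\<integral>s. emp_mmd_sq s \<partial>sample)"
    unfolding power2_emp_dev using int_none int_emp by simp
  also have "\<dots> \<le> (\<integral>s. of_bool (n_obs s = 0) + 1 / n_obs s \<partial>sample)"
    using expectation_emp_mmd_sq_le int_none int_inv by simp
  also have "\<dots> \<le> (\<integral>s. 2 * (1 / (n_obs s + 1)) \<partial>sample)"
  proof (rule integral_mono)
    show "of_bool (n_obs s = 0) + 1 / n_obs s \<le> 2 * (1 / (n_obs s + 1))" for s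
      using n_obs_ge_1[of s] by (cases "n_obs s = 0") (simp_all add: field_simps)
  qed (use int_none int_inv integrable_mult_right[OF int_inv_Suc, of 2] in auto)
  also have "\<dots> = 2 * (\<integral>s. 1 / (n_obs s + 1) \<partial>sample)"
    by (rule integral_mult_right_zero)
  also have "\<dots> \<le> 2 / (real n * p_obs)"
  proof -
    have "real n * p_obs > 0" using n_pos p_obs_pos by simp
    then have "(\<integral>s. 1 / (n_obs s + 1) \<partial>sample) \<le> 1 / (real n * p_obs)"
      using expectation_inverse_n_obs_Suc_le by (simp add: field_simps)
    then show ?thesis by simp
  qed
  finally show ?thesis .
qed

lemma expectation_emp_dev_le: "(\<integral>s. emp_dev s \<partial>sample) \<le> sqrt (2 / (real n * p_obs))"
proof -
  have "(\<integral>s. emp_dev s \<partial>sample)\<^sup>2 \<le> (\<integral>s. (emp_dev s)\<^sup>2 \<partial>sample)"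
    using abs_emp_dev_le by (intro prob_space.square_integral_le_integral_square[OF prob_space_sample]) auto
  also have "\<dots> \<le> 2 / (real n * p_obs)" by (rule expectation_power2_emp_dev_le)
  finally show ?thesis by (simp add: real_le_rsqrt)
qed

lemma sqrt_sample_term_le:
  "sqrt (2 / (real n * p_obs)) \<le> sqrt 2 / sqrt (real n * pi_star * (1 - \<epsilon>))"
proof -
  have "0 < real n * pi_star * (1 - \<epsilon>)" using eps pi_star_pos n_pos by simp
  moreover have "real n * pi_star * (1 - \<epsilon>) \<le> real n * p_obs"
    using mult_left_mono[OF p_obs_ge, of "real n"] by (simp add: mult_ac)
  ultimately show ?thesis
    by (simp add: real_sqrt_divide divide_left_mono real_sqrt_le_mono)
qed

lemma expectation_mmd_of_better_fit_le:
  assumes fit: "\<And>s. s \<in> space sample \<Longrightarrow> real_distribution (R s) \<and>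
      (\<Sum>i\<in>observed s. mmd_sq k (R s) (return borel (fst (s i))))
        \<le> (\<Sum>i\<in>observed s. mmd_sq k Pstar (return borel (fst (s i))))"
  shows "(\<integral>\<^sup>+s. ennreal (mmd k (R s) Pstar) \<partial>sample)
    \<le> ennreal (4 * \<epsilon> + 8 * \<epsilon> / (pi_star * (1 - \<epsilon>)) + 2 * sqrt pi_var / pi_star
                + 2 * sqrt 2 / sqrt (real n * pi_star * (1 - \<epsilon>)))"
proof -
  interpret sample: prob_space sample by (rule prob_space_sample)
  have pointwise: "mmd k (R s) Pstar \<le> 2 * emp_dev s + 2 * bias_tv" if s: "s \<in> space sample" for s
  proof (cases "n_obs s = 0")
    case True
    then show ?thesis
      using mmd_le_2[OF conjunct1[OF fit[OF s]] Pstar] bias_tv_nonneg by (simp add: emp_dev_def)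
  next
    case False
    then show ?thesis
      using mmd_le_of_better_fit[OF conjunct1[OF fit[OF s]] False conjunct2[OF fit[OF s]]]
        mmd_obs_distr_Pstar_le by (simp add: emp_dev_def)
  qed
  have int: "integrable sample emp_dev" using abs_emp_dev_le by (intro sample_integrable) auto
  have "(\<integral>\<^sup>+s. ennreal (mmd k (R s) Pstar) \<partial>sample) \<le> (\<integral>\<^sup>+s. ennreal (2 * emp_dev s + 2 * bias_tv) \<partial>sample)"
    using pointwise by (intro nn_integral_mono ennreal_leI) auto
  also have "\<dots> = ennreal (\<integral>s. 2 * emp_dev s + 2 * bias_tv \<partial>sample)"
    using int emp_dev_nonneg bias_tv_nonneg by (intro nn_integral_eq_integral) (auto intro!: AE_I2)
  also have "(\<integral>s. 2 * emp_dev s + 2 * bias_tv \<partial>sample) = 2 * (\<integral>s. emp_dev s \<partial>sample) + 2 * bias_tv"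
    using int sample.prob_space by simp
  also have "\<dots> \<le> 2 * (sqrt 2 / sqrt (real n * pi_star * (1 - \<epsilon>)))
      + 2 * (sqrt pi_var / pi_star + 2 * \<epsilon> / (pi_star * (1 - \<epsilon>)))"
    using order_trans[OF expectation_emp_dev_le sqrt_sample_term_le] bias_tv_le
    by (intro add_mono mult_left_mono) auto
  also have "\<dots> \<le> 4 * \<epsilon> + 8 * \<epsilon> / (pi_star * (1 - \<epsilon>)) + 2 * sqrt pi_var / pi_star
      + 2 * sqrt 2 / sqrt (real n * pi_star * (1 - \<epsilon>))"
  proof -
    have "0 \<le> \<epsilon> / (pi_star * (1 - \<epsilon>))" using eps pi_star_pos by simp
    then show ?thesis using eps by (simp add: times_divide_eq_right[symmetric] del: times_divide_eq_right)
  qed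
  finally show ?thesis by (simp add: ennreal_leI)
qed

lemma mmd_objective_eq:
  assumes "real_distribution (P \<theta>)"
  shows "mmd_objective k P n s \<theta> = (\<Sum>i\<in>observed s. mmd_sq k (P \<theta>) (return borel (fst (s i)))) / real n"
  unfolding mmd_objective_def observed_def using power2_mmd[OF assms real_distribution_return] by simp

end

theorem theorem9:
  fixes k :: "real \<Rightarrow> real \<Rightarrow> real"
    and P :: "'a \<Rightarrow> real measure" and \<Theta> :: "'a set"
    and \<theta>star :: 'a and PX Q :: "real measure" and \<epsilon> :: real
    and \<pi> :: "real \<Rightarrow> real" and PXM :: "(real \<times> bool) measure" and n :: nat
    and thetahat :: "(nat \<Rightarrow> real \<times> bool) \<Rightarrow> 'a"
  assumes kernel: "pd_kernel k" "characteristic k" "\<And>x y. \<bar>k x y\<bar> \<le> 1"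
      "(\<lambda>(x, y). k x y) \<in> borel_measurable borel"
    and model: "\<And>\<theta>. \<theta> \<in> \<Theta> \<Longrightarrow> prob_space (P \<theta>) \<and> sets (P \<theta>) = sets borel"
    and theta_star: "\<theta>star \<in> \<Theta>"
    and Q: "prob_space Q" "sets Q = sets borel"
    and eps: "0 \<le> \<epsilon>" "\<epsilon> < 1"
    and PX: "prob_space PX" "sets PX = sets borel"
    and mixture: "\<And>A. A \<in> sets borel \<Longrightarrow>
                    measure PX A = (1 - \<epsilon>) * measure (P \<theta>star) A + \<epsilon> * measure Q A"
    and pi_meas: "\<pi> \<in> borel_measurable borel" and pi_range: "\<And>x. 0 \<le> \<pi> x \<and> \<pi> x \<le> 1"
    and PXM: "prob_space PXM" "sets PXM = sets (borel \<Otimes>\<^sub>M count_space UNIV)"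
    and PXM_marg: "distr PXM borel fst = PX"
    and PXM_cond: "\<And>A. A \<in> sets borel \<Longrightarrow>
                    measure PXM (A \<times> {True}) = (\<integral>x\<in>A. \<pi> x \<partial>PX)"
    and pistar_pos: "(\<integral>x. \<pi> x \<partial>P \<theta>star) > 0"
    and n_pos: "n > 0"
    and estimator: "\<And>s. s \<in> space (\<Pi>\<^sub>M i\<in>{..<n}. PXM) \<Longrightarrow>
         thetahat s \<in> \<Theta> \<and>
         (\<forall>\<theta>\<in>\<Theta>. mmd_objective k P n s (thetahat s) \<le> mmd_objective k P n s \<theta>)"
  shows "(\<integral>\<^sup>+ s. ennreal (mmd k (P (thetahat s)) (P \<theta>star)) \<partial>(\<Pi>\<^sub>M i\<in>{..<n}. PXM))
     \<le> ennreal (let \<pi>s = (\<integral>x. \<pi> x \<partial>P \<theta>star);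
                    V = (\<integral>x. (\<pi> x - \<pi>s)\<^sup>2 \<partial>P \<theta>star)
                in 4 * \<epsilon> + 8 * \<epsilon> / (\<pi>s * (1 - \<epsilon>)) + 2 * sqrt V / \<pi>s
                   + 2 * sqrt 2 / sqrt (real n * \<pi>s * (1 - \<epsilon>)))"
proof -
  have distr_P: "real_distribution (P \<theta>)" if "\<theta> \<in> \<Theta>" for \<theta>
    using model[OF that] by (simp add: real_distribution_iff)
  interpret missing_data_sample k "P \<theta>star" Q PX \<epsilon> \<pi> PXM n
    by (intro missing_data_sample.intro missing_data_sample_axioms.intro missing_data.intro
        missing_data_axioms.intro bounded_pd_kernel.intro)
      (use kernel distr_P[OF theta_star] Q eps PX mixture pi_meas pi_range PXM PXM_cond pistar_pos n_pos
        in \<open>simp_all add: real_distribution_iff\<close>)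
  have "real_distribution (P (thetahat s)) \<and>
      (\<Sum>i\<in>observed s. mmd_sq k (P (thetahat s)) (return borel (fst (s i))))
        \<le> (\<Sum>i\<in>observed s. mmd_sq k (P \<theta>star) (return borel (fst (s i))))"
    if s: "s \<in> space sample" for s
  proof
    have "thetahat s \<in> \<Theta>" using estimator[OF s] ..
    then show hat: "real_distribution (P (thetahat s))" by (rule distr_P)
    have "mmd_objective k P n s (thetahat s) \<le> mmd_objective k P n s \<theta>star"
      using estimator[OF s] theta_star by blast
    then show "(\<Sum>i\<in>observed s. mmd_sq k (P (thetahat s)) (return borel (fst (s i))))
        \<le> (\<Sum>i\<in>observed s. mmd_sq k (P \<theta>star) (return borel (fst (s i))))"
      unfolding mmd_objective_eq[where P=P, OF hat] mmd_objective_eq[where P=P, OF distr_P[OF theta_star]]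
      using n_pos by (simp add: divide_le_cancel)
  qed
  then show ?thesis
    using expectation_mmd_of_better_fit_le[of "\<lambda>s. P (thetahat s)"]
    by (simp add: pi_star_def pi_var_def Let_def)
qed

end
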